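(* Let $\Sigma$ be an extended vocabulary which contains a unary set predicate name $\mathsf{SET}$ and does not contain the binary relation name $\mathsf{ancestor}$. There exists a non-deterministic overlay $\mathrm{CMSO}[2]$-transduction $\tau$ with the following property. Let $(U,\mathcal{S})$ be a laminar set system, represented as the $\{\mathsf{SET}\}$-structure $\mathbb{S}$, and let $T$ be the laminar tree of $(U,\mathcal{S})$ (with $L(T)=U$). Let $\mathbb{A}$ be any $\Sigma$-structure with $\mathbb{S}\sqsubseteq\mathbb{A}$. Then $\tau(\mathbb{A})$ is non-empty, and every output in $\tau(\mathbb{A})$ is equal to $\mathbb{A}\sqcup\mathbb{T}$ for some $\{\mathsf{ancestor}\}$-structure $\mathbb{T}$ representing $T$.
   Context: Structures. An extended vocabulary is a finite set of symbols, each a relation name or a set predicate name, with an arity. A $\Sigma$-structure $\mathbb{A}$ consists of a finite universe $U_{\mathbb{A}}$, for each relation name $R\in\Sigma$ of arity $k$ a $k$-ary relation $R_{\mathbb{A}}$ on $U_{\mathbb{A}}$, and for each set predicate name $P\in\Sigma$ of arity $k$ a $k$-ary relation $P_{\mathbb{A}}$ on subsets of $U_{\mathbb{A}}$. For a $\Sigma$-structure $\mathbb{A}$ and a $\Gamma$-structure $\mathbb{B}$: $\mathbb{A}\sqsubseteq\mathbb{B}$ means $\Sigma\subseteq\Gamma$, $U_{\mathbb{A}}\subseteq U_{\mathbb{B}}$ and $Q_{\mathbb{A}}=Q_{\mathbb{B}}$ for all $Q\in\Sigma$; $\mathbb{A}\sqcup\mathbb{B}$ is the $(\Sigma\cup\Gamma)$-structure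 with universe $U_{\mathbb{A}}\cup U_{\mathbb{B}}$ interpreting symbols of $\Sigma\setminus\Gamma$ as in $\mathbb{A}$, of $\Gamma\setminus\Sigma$ as in $\mathbb{B}$, and of $\Sigma\cap\Gamma$ as $Q_{\mathbb{A}}\cup Q_{\mathbb{B}}$. Logic and transductions. $\mathrm{CMSO}[2]$ is monadic second-order logic over such structures (quantification over elements and subsets of the universe; atomic formulas from equality, membership, the relations and set predicates) extended with a unary set predicate true of a set iff its size is even. A $\Sigma$-to-$\Gamma$ transduction is a set $\tau$ of pairs (input $\Sigma$-structure, output $\Gamma$-structure); $\tau(\mathbb{A})$ is the set of outputs on input $\mathbb{A}$; $\tau$ is an overlay transduction if $\mathbb{A}\sqsubseteq\mathbb{B}$ for all $(\mathbb{A},\mathbb{B})\in\tau$. A $\mathrm{CMSO}[2]$-transduction is a finite composition of atomic transductions: filtering (keep the input unchanged iff it satisfies a fixed sentence); universe restriction (restrict universe and all relations/predicates to the elements satisfying a fixed formula with one free first-order variable); interpretation (same universe, each output symbol $Q$ interpreted as the tuples satisfying a fixed formula with $\mathrm{ar}(Q)$ free variables, first-order for relation names, monadic for set predicate names); copying (for fixed $k$, add $k$ fresh copies of every element and binary relations $\mathsf{copy}_i$, $i\in[k]$, relating each original element to its $i$-th copy, keeping original interpretations); colouring (add a new unary relation interpreted as an arbitrary subset of the universe, every choice yielding an output). It is non-deterministic if it uses colouring. Set systems. A set system is a pair $(U,\mathcal{S})$ with $U$ finite and $\mathcal{S}$ a family of subsets of $U$ such that $\emptyset\notin\mathcal{S}$,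 $U\in\mathcal{S}$, and $\{a\}\in\mathcal{S}$ for every $a\in U$; it is represented as the $\{\mathsf{SET}\}$-structure with universe $U$ and unary set predicate $\mathsf{SET}$ interpreted as $\mathcal{S}$. Two sets overlap if they intersect and neither contains the other; $(U,\mathcal{S})$ is laminar if no two members of $\mathcal{S}$ overlap. The laminar tree of a laminar $(U,\mathcal{S})$ is the rooted tree whose nodes are the members of $\mathcal{S}$, with root $U$, where $X$ is a child of $Y$ iff $X\subsetneq Y$ and no member of $\mathcal{S}$ lies strictly between them; its leaves are the singletons, identified with the elements of $U$, so $L(T)=U$. A rooted tree $T$ with $L(T)=U$ is represented by an $\{\mathsf{ancestor}\}$-structure with universe $V(T)$ (containing $U$ as the leaves) in which $\mathsf{ancestor}(u,v)$ holds iff $u$ is an ancestor of $v$ (every node is its own ancestor). *)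

theory Defs
  imports Main
begin

datatype symbol = RelSym string nat | SetSym string nat

fun arity :: "symbol \<Rightarrow> nat" where
  "arity (RelSym _ k) = k"
| "arity (SetSym _ k) = k"

fun is_rel :: "symbol \<Rightarrow> bool" where
  "is_rel (RelSym _ _) = True"
| "is_rel (SetSym _ _) = False"

record 'e struct =
  univ :: "'e set"
  voc  :: "symbol set"
  rels :: "symbol \<Rightarrow> 'e list set"
  sets :: "symbol \<Rightarrow> 'e set list set"

text \<open>Well-formed structures over vocabulary \<open>\<Sigma>\<close>; symbols outside the vocabulary
  (and set predicates in the relation field / vice versa) are interpreted as empty,
  so that record equality is equality of structures.\<close>
definition is_structure :: "symbol set \<Rightarrow> 'e struct \<Rightarrow> bool" where
  "is_structure \<Sigma> A \<longleftrightarrow>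
     finite \<Sigma> \<and> voc A = \<Sigma> \<and> finite (univ A) \<and>
     (\<forall>Q. Q \<notin> \<Sigma> \<or> \<not> is_rel Q \<longrightarrow> rels A Q = {}) \<and>
     (\<forall>Q. Q \<notin> \<Sigma> \<or> is_rel Q \<longrightarrow> sets A Q = {}) \<and>
     (\<forall>Q\<in>\<Sigma>. is_rel Q \<longrightarrow> (\<forall>xs\<in>rels A Q. length xs = arity Q \<and> set xs \<subseteq> univ A)) \<and>
     (\<forall>Q\<in>\<Sigma>. \<not> is_rel Q \<longrightarrow> (\<forall>Xs\<in>sets A Q. length Xs = arity Q \<and> (\<forall>X\<in>set Xs. X \<subseteq> univ A)))"

definition substruct :: "'e struct \<Rightarrow> 'e struct \<Rightarrow> bool" where
  "substruct A B \<longleftrightarrow> voc A \<subseteq> voc B \<and> univ A \<subseteq> univ B \<and>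
     (\<forall>Q\<in>voc A. rels A Q = rels B Q \<and> sets A Q = sets B Q)"

definition join :: "'e struct \<Rightarrow> 'e struct \<Rightarrow> 'e struct" where
  "join A B = \<lparr> univ = univ A \<union> univ B, voc = voc A \<union> voc B,
     rels = (\<lambda>Q. if Q \<in> voc A \<and> Q \<in> voc B then rels A Q \<union> rels B Q
                 else if Q \<in> voc A then rels A Q else if Q \<in> voc B then rels B Q else {}),
     sets = (\<lambda>Q. if Q \<in> voc A \<and> Q \<in> voc B then sets A Q \<union> sets B Q
                 else if Q \<in> voc A then sets A Q else if Q \<in> voc B then sets B Q else {}) \<rparr>"

text \<open>First-order variables and monadic (set) variables are both indexed by naturals,
  in separate name spaces.\<close>
datatype form =
    Eq nat nat
  | Mem nat nat
  | RelAtom symbol "nat list"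
  | SetAtom symbol "nat list"
  | Even nat
  | Neg form
  | Conj form form
  | ExFO nat form
  | ExSO nat form

fun fo_free :: "form \<Rightarrow> nat set" where
  "fo_free (Eq x y) = {x, y}"
| "fo_free (Mem x X) = {x}"
| "fo_free (RelAtom R xs) = set xs"
| "fo_free (SetAtom P Xs) = {}"
| "fo_free (Even X) = {}"
| "fo_free (Neg \<phi>) = fo_free \<phi>"
| "fo_free (Conj \<phi> \<psi>) = fo_free \<phi> \<union> fo_free \<psi>"
| "fo_free (ExFO x \<phi>) = fo_free \<phi> - {x}"
| "fo_free (ExSO X \<phi>) = fo_free \<phi>"

fun so_free :: "form \<Rightarrow> nat set" where
  "so_free (Eq x y) = {}"
| "so_free (Mem x X) = {X}"
| "so_free (RelAtom R xs) = {}"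
| "so_free (SetAtom P Xs) = set Xs"
| "so_free (Even X) = {X}"
| "so_free (Neg \<phi>) = so_free \<phi>"
| "so_free (Conj \<phi> \<psi>) = so_free \<phi> \<union> so_free \<psi>"
| "so_free (ExFO x \<phi>) = so_free \<phi>"
| "so_free (ExSO X \<phi>) = so_free \<phi> - {X}"

text \<open>Satisfaction; quantifiers range over elements / subsets of the universe.
  Atoms for symbols not interpreted in the structure are false (empty interpretation).\<close>
fun sat :: "'e struct \<Rightarrow> (nat \<Rightarrow> 'e) \<Rightarrow> (nat \<Rightarrow> 'e set) \<Rightarrow> form \<Rightarrow> bool" where
  "sat A v V (Eq x y) \<longleftrightarrow> v x = v y"
| "sat A v V (Mem x X) \<longleftrightarrow> v x \<in> V X"
| "sat A v V (RelAtom R xs) \<longleftrightarrow> map v xs \<in> rels A R"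
| "sat A v V (SetAtom P Xs) \<longleftrightarrow> map V Xs \<in> sets A P"
| "sat A v V (Even X) \<longleftrightarrow> even (card (V X))"
| "sat A v V (Neg \<phi>) \<longleftrightarrow> \<not> sat A v V \<phi>"
| "sat A v V (Conj \<phi> \<psi>) \<longleftrightarrow> sat A v V \<phi> \<and> sat A v V \<psi>"
| "sat A v V (ExFO x \<phi>) \<longleftrightarrow> (\<exists>a\<in>univ A. sat A (v(x := a)) V \<phi>)"
| "sat A v V (ExSO X \<phi>) \<longleftrightarrow> (\<exists>Y. Y \<subseteq> univ A \<and> sat A v (V(X := Y)) \<phi>)"

datatype atomic =
    Filter form
  | Restrict form
  | Interp "(symbol \<times> form) list"
  | Copy "string list"
  | Colour string

fun wf_atomic :: "atomic \<Rightarrow> bool" where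
  "wf_atomic (Filter \<phi>) \<longleftrightarrow> fo_free \<phi> = {} \<and> so_free \<phi> = {}"
| "wf_atomic (Restrict \<phi>) \<longleftrightarrow> fo_free \<phi> \<subseteq> {0} \<and> so_free \<phi> = {}"
| "wf_atomic (Interp qs) \<longleftrightarrow> distinct (map fst qs) \<and>
     (\<forall>(Q, \<phi>)\<in>set qs. if is_rel Q then fo_free \<phi> \<subseteq> {..<arity Q} \<and> so_free \<phi> = {}
                        else fo_free \<phi> = {} \<and> so_free \<phi> \<subseteq> {..<arity Q})"
| "wf_atomic (Copy ns) \<longleftrightarrow> distinct ns"
| "wf_atomic (Colour c) \<longleftrightarrow> True"

definition restrict_struct :: "'e set \<Rightarrow> 'e struct \<Rightarrow> 'e struct" where
  "restrict_struct W A = \<lparr> univ = univ A \<inter> W, voc = voc A,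
     rels = (\<lambda>Q. {xs \<in> rels A Q. set xs \<subseteq> W}),
     sets = (\<lambda>Q. {Xs \<in> sets A Q. \<forall>X\<in>set Xs. X \<subseteq> W}) \<rparr>"

definition interp_struct :: "'e struct \<Rightarrow> (symbol \<times> form) list \<Rightarrow> 'e struct" where
  "interp_struct A qs = \<lparr> univ = univ A, voc = fst ` set qs,
     rels = (\<lambda>Q. if is_rel Q \<and> Q \<in> fst ` set qs then
                   {xs. length xs = arity Q \<and> set xs \<subseteq> univ A \<and>
                        sat A (\<lambda>i. xs ! i) (\<lambda>_. {}) (the (map_of qs Q))}
                 else {}),
     sets = (\<lambda>Q. if \<not> is_rel Q \<and> Q \<in> fst ` set qs then
                   {Xs. length Xs = arity Q \<and> (\<forall>X\<in>set Xs. X \<subseteq> univ A) \<and>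
                        sat A (\<lambda>_. undefined) (\<lambda>i. Xs ! i) (the (map_of qs Q))}
                 else {}) \<rparr>"

text \<open>Copying: the fresh copies are arbitrary new elements (the result is determined up to
  the names of the fresh elements, and every naming is an output).\<close>
definition copy_outputs :: "string list \<Rightarrow> 'e struct \<Rightarrow> 'e struct set" where
  "copy_outputs ns A = {B. \<exists>f :: 'e \<times> nat \<Rightarrow> 'e.
      inj_on f (univ A \<times> {..<length ns}) \<and>
      f ` (univ A \<times> {..<length ns}) \<inter> univ A = {} \<and>
      B = \<lparr> univ = univ A \<union> f ` (univ A \<times> {..<length ns}),
            voc = voc A \<union> {RelSym (ns ! i) 2 | i. i < length ns},
            rels = (\<lambda>Q. if (\<exists>i<length ns. Q = RelSym (ns ! i) 2)
                        then {[a, f (a, i)] | a i. a \<in> univ A \<and> i < length ns \<and> Q = RelSym (ns ! i) 2}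
                        else rels A Q),
            sets = sets A \<rparr>}"

definition colour_outputs :: "string \<Rightarrow> 'e struct \<Rightarrow> 'e struct set" where
  "colour_outputs c A = {B. \<exists>X. X \<subseteq> univ A \<and>
      B = \<lparr> univ = univ A, voc = voc A \<union> {RelSym c 1},
            rels = (rels A)(RelSym c 1 := {[a] | a. a \<in> X}),
            sets = sets A \<rparr>}"

fun step :: "atomic \<Rightarrow> 'e struct \<Rightarrow> 'e struct set" where
  "step (Filter \<phi>) A = (if sat A (\<lambda>_. undefined) (\<lambda>_. {}) \<phi> then {A} else {})"
| "step (Restrict \<phi>) A =
     {restrict_struct {a \<in> univ A. sat A (\<lambda>_. a) (\<lambda>_. {}) \<phi>} A}"
| "step (Interp qs) A = {interp_struct A qs}"
| "step (Copy ns) A =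
     (if \<forall>n\<in>set ns. RelSym n 2 \<notin> voc A then copy_outputs ns A else {})"
| "step (Colour c) A = (if RelSym c 1 \<notin> voc A then colour_outputs c A else {})"

fun run :: "atomic list \<Rightarrow> 'e struct \<Rightarrow> 'e struct set" where
  "run [] A = {A}"
| "run (t # ts) A = (\<Union>B\<in>step t A. run ts B)"

definition wf_transduction :: "atomic list \<Rightarrow> bool" where
  "wf_transduction ts \<longleftrightarrow> (\<forall>t\<in>set ts. wf_atomic t)"

definition overlay_on :: "symbol set \<Rightarrow> atomic list \<Rightarrow> 'e itself \<Rightarrow> bool" where
  "overlay_on \<Sigma> ts _ \<longleftrightarrow> (\<forall>A :: 'e struct. is_structure \<Sigma> A \<longrightarrow> (\<forall>B\<in>run ts A. substruct A B))"

abbreviation SET :: symbol where "SET \<equiv> SetSym ''SET'' 1"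
abbreviation ancestor :: symbol where "ancestor \<equiv> RelSym ''ancestor'' 2"

definition set_system :: "'e set \<Rightarrow> 'e set set \<Rightarrow> bool" where
  "set_system U S \<longleftrightarrow> finite U \<and> (\<forall>X\<in>S. X \<subseteq> U) \<and> {} \<notin> S \<and> U \<in> S \<and> (\<forall>a\<in>U. {a} \<in> S)"

definition overlap :: "'e set \<Rightarrow> 'e set \<Rightarrow> bool" where
  "overlap X Y \<longleftrightarrow> X \<inter> Y \<noteq> {} \<and> \<not> X \<subseteq> Y \<and> \<not> Y \<subseteq> X"

definition laminar :: "'e set \<Rightarrow> 'e set set \<Rightarrow> bool" where
  "laminar U S \<longleftrightarrow> set_system U S \<and> (\<forall>X\<in>S. \<forall>Y\<in>S. \<not> overlap X Y)"

definition set_system_struct :: "'e set \<Rightarrow> 'e set set \<Rightarrow> 'e struct" where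
  "set_system_struct U S = \<lparr> univ = U, voc = {SET}, rels = (\<lambda>_. {}),
     sets = (\<lambda>Q. if Q = SET then {[X] | X. X \<in> S} else {}) \<rparr>"

definition lam_child :: "'e set set \<Rightarrow> 'e set \<Rightarrow> 'e set \<Rightarrow> bool" where
  "lam_child S X Y \<longleftrightarrow> X \<in> S \<and> Y \<in> S \<and> X \<subset> Y \<and> \<not> (\<exists>Z\<in>S. X \<subset> Z \<and> Z \<subset> Y)"

text \<open>Ancestor relation (reflexive) of the laminar tree: Y is an ancestor of X.\<close>
definition lam_ancestor :: "'e set set \<Rightarrow> 'e set \<Rightarrow> 'e set \<Rightarrow> bool" where
  "lam_ancestor S Y X \<longleftrightarrow> Y \<in> S \<and> X \<in> S \<and> (\<lambda>P C. lam_child S C P)\<^sup>*\<^sup>* Y X"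

definition represents_laminar_tree :: "'e struct \<Rightarrow> 'e set \<Rightarrow> 'e set set \<Rightarrow> bool" where
  "represents_laminar_tree Tr U S \<longleftrightarrow>
     voc Tr = {ancestor} \<and> U \<subseteq> univ Tr \<and> sets Tr = (\<lambda>_. {}) \<and>
     (\<exists>node. bij_betw node (univ Tr) S \<and> (\<forall>a\<in>U. node a = {a}) \<and>
        rels Tr = (\<lambda>Q. if Q = ancestor then
            {[u, v] | u v. u \<in> univ Tr \<and> v \<in> univ Tr \<and> lam_ancestor S (node u) (node v)}
          else {}))"

end

theory Submission
  imports Defs
begin

text \<open>Choose two sets \<open>M1\<close> and \<open>M2\<close> such that the parity type
  \<open>(|X \<inter> M1| mod 2, |X \<inter> M2| mod 2)\<close> of every internal node \<open>X\<close> of the laminar tree is nonzero and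
  the children of \<open>X\<close> do not all have the same type; such colourings are assembled bottom-up from
  colourings of the children. Descending from \<open>X\<close> into children of a different type reaches a leaf
  \<open>a\<close> such that \<open>X\<close> is the least non-singleton node of its type containing \<open>a\<close>. Hence \<open>X\<close> is
  MSO-definable from \<open>a\<close> and one of the three nonzero types. The transduction guesses the colouring
  and one such leaf per internal node, checks the guess with a sentence, makes three copies of
  every element (one per type), keeps the copies of the chosen leaves as the internal nodes, and
  interprets \<open>ancestor\<close> as inclusion of the represented sets.\<close>

section \<open>Laminar trees\<close>

definition internal :: "'e set set \<Rightarrow> 'e set \<Rightarrow> bool" where
  "internal S X \<longleftrightarrow> X \<in> S \<and> (\<forall>a. X \<noteq> {a})"

lemma lam_child_card_less: "lam_child S C Y \<Longrightarrow> finite Y \<Longrightarrow> card C < card Y"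
  unfolding lam_child_def by (simp add: psubset_card_mono)

locale laminar_system =
  fixes U :: "'e set" and S :: "'e set set"
  assumes laminar: "laminar U S"
begin

lemma member_subset: "X \<in> S \<Longrightarrow> X \<subseteq> U"
  using laminar unfolding laminar_def set_system_def by auto

lemma member_nonempty: "X \<in> S \<Longrightarrow> X \<noteq> {}"
  using laminar unfolding laminar_def set_system_def by auto

lemma finite_member: "X \<in> S \<Longrightarrow> finite X"
  using laminar member_subset unfolding laminar_def set_system_def by (auto intro: finite_subset)

lemma finite_family: "finite S"
proof (rule finite_subset)
  show "S \<subseteq> Pow U" using member_subset by blast
  show "finite (Pow U)" using laminar unfolding laminar_def set_system_def by simp
qed

lemma top_member: "U \<in> S"
  using laminar unfolding laminar_def set_system_def by auto

lemma singleton_member: "a \<in> U \<Longrightarrow> {a} \<in> S"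
  using laminar unfolding laminar_def set_system_def by auto

lemma nested: "X \<in> S \<Longrightarrow> Y \<in> S \<Longrightarrow> X \<inter> Y \<noteq> {} \<Longrightarrow> X \<subseteq> Y \<or> Y \<subseteq> X"
  using laminar unfolding laminar_def overlap_def by blast

lemma non_internal_singleton:
  assumes "Y \<in> S" "\<not> internal S Y"
  obtains a where "Y = {a}" "a \<in> U"
  using assms member_subset unfolding internal_def by auto

lemma lam_child_above:
  assumes X: "X \<in> S" and Y: "Y \<in> S" and XY: "X \<subset> Y"
  obtains C where "lam_child S C Y" "X \<subseteq> C"
proof -
  let ?between = "{W \<in> S. X \<subseteq> W \<and> W \<subset> Y}"
  have "finite ?between" "?between \<noteq> {}" using finite_family X XY by auto
  from finite_has_maximal[OF this] obtain C
    where C: "C \<in> ?between" and maximal: "\<forall>W \<in> ?between. C \<subseteq> W \<longrightarrow> C = W"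
    by blast
  have "\<not> (\<exists>Z\<in>S. C \<subset> Z \<and> Z \<subset> Y)"
  proof
    assume "\<exists>Z\<in>S. C \<subset> Z \<and> Z \<subset> Y"
    then obtain Z where Z: "Z \<in> S" "C \<subset> Z" "Z \<subset> Y" by blast
    with C have "Z \<in> ?between" by auto
    with Z(2) maximal show False by blast
  qed
  with C Y have "lam_child S C Y" unfolding lam_child_def by simp
  with C that show thesis by blast
qed

lemma lam_child_disjoint:
  assumes C1: "lam_child S C1 Y" and C2: "lam_child S C2 Y" and "C1 \<noteq> C2"
  shows "C1 \<inter> C2 = {}"
proof (rule ccontr)
  assume "C1 \<inter> C2 \<noteq> {}"
  with nested[of C1 C2] C1 C2 have "C1 \<subseteq> C2 \<or> C2 \<subseteq> C1" unfolding lam_child_def by simp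
  with \<open>C1 \<noteq> C2\<close> have "C1 \<subset> C2 \<or> C2 \<subset> C1" by auto
  with C1 C2 show False unfolding lam_child_def by auto
qed

lemma below_lam_child:
  assumes C: "lam_child S C Y" and Z: "Z \<in> S" "Z \<subseteq> Y" "Z \<inter> C \<noteq> {}"
  shows "Z = Y \<or> Z \<subseteq> C"
proof -
  from nested[of Z C] C Z have "Z \<subseteq> C \<or> C \<subseteq> Z" unfolding lam_child_def by simp
  with C Z show ?thesis unfolding lam_child_def by auto
qed

lemma lam_ancestor_iff: "lam_ancestor S Y X \<longleftrightarrow> Y \<in> S \<and> X \<in> S \<and> X \<subseteq> Y"
proof -
  have "(\<lambda>P C. lam_child S C P)\<^sup>*\<^sup>* Y X" if "Y \<in> S" "X \<in> S" "X \<subseteq> Y" for Y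
    using that
  proof (induction "card Y" arbitrary: Y rule: less_induct)
    case less
    show ?case
    proof (cases "X = Y")
      case False
      with less.prems obtain C where C: "lam_child S C Y" "X \<subseteq> C"
        using lam_child_above[of X Y] by auto
      have "card C < card Y" using lam_child_card_less[OF C(1)] finite_member less.prems by simp
      moreover have "C \<in> S" using C(1) unfolding lam_child_def by simp
      ultimately have "(\<lambda>P C. lam_child S C P)\<^sup>*\<^sup>* C X" using less.hyps less.prems C(2) by simp
      with C(1) show ?thesis by (simp add: converse_rtranclp_into_rtranclp)
    qed simp
  qed
  moreover have "X \<subseteq> Y" if "(\<lambda>P C. lam_child S C P)\<^sup>*\<^sup>* Y X" for Y
    using that by (induction rule: rtranclp_induct) (auto simp: lam_child_def)
  ultimately show ?thesis
    unfolding lam_ancestor_def by blast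
qed

lemma lam_child_through:
  assumes "internal S Y" "a \<in> Y"
  obtains C where "lam_child S C Y" "a \<in> C"
proof -
  have "Y \<in> S" using assms unfolding internal_def by simp
  moreover have "{a} \<in> S" "{a} \<subset> Y"
    using assms singleton_member member_subset unfolding internal_def by auto
  ultimately show thesis using lam_child_above[of "{a}" Y] that by auto
qed

lemma internal_two_children:
  assumes "internal S Y"
  obtains C1 C2 where "lam_child S C1 Y" "lam_child S C2 Y" "C1 \<noteq> C2"
proof -
  obtain a where "a \<in> Y" using assms member_nonempty unfolding internal_def by auto
  then obtain C1 where C1: "lam_child S C1 Y" using lam_child_through[OF assms] by blast
  then obtain b where "b \<in> Y" "b \<notin> C1" unfolding lam_child_def by auto
  then obtain C2 where "lam_child S C2 Y" "C1 \<noteq> C2" using lam_child_through[OF assms] by metis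
  with C1 that show thesis by blast
qed

lemma children_partition:
  assumes "internal S Y"
  shows "\<Union>{C. lam_child S C Y} = Y"
proof
  show "Y \<subseteq> \<Union>{C. lam_child S C Y}"
  proof
    fix a assume "a \<in> Y"
    then obtain C where "lam_child S C Y" "a \<in> C" using lam_child_through[OF assms] by blast
    then show "a \<in> \<Union>{C. lam_child S C Y}" by blast
  qed
qed (auto simp: lam_child_def)

end

section \<open>Parity colourings and representatives\<close>

definition parity_type :: "'e set \<Rightarrow> 'e set \<Rightarrow> 'e set \<Rightarrow> nat \<times> nat" where
  "parity_type M1 M2 Z = (card (Z \<inter> M1) mod 2, card (Z \<inter> M2) mod 2)"

definition nonzero_types :: "(nat \<times> nat) set" where
  "nonzero_types = {(1, 0), (0, 1), (1, 1)}"

definition mixed_children :: "'e set set \<Rightarrow> ('e set \<Rightarrow> 'b) \<Rightarrow> 'e set \<Rightarrow> bool" where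
  "mixed_children S T Z \<longleftrightarrow> (\<forall>t. \<exists>C. lam_child S C Z \<and> T C \<noteq> t)"

definition good_colouring :: "'e set set \<Rightarrow> 'e set \<Rightarrow> 'e set \<Rightarrow> 'e set \<Rightarrow> bool" where
  "good_colouring S M1 M2 Y \<longleftrightarrow> (\<forall>Z. internal S Z \<longrightarrow> Z \<subseteq> Y \<longrightarrow>
     parity_type M1 M2 Z \<noteq> (0, 0) \<and> mixed_children S (parity_type M1 M2) Z)"

lemma parity_type_cong:
  assumes "Z \<subseteq> C" "M1 \<inter> C = M1' \<inter> C" "M2 \<inter> C = M2' \<inter> C"
  shows "parity_type M1 M2 Z = parity_type M1' M2' Z"
proof -
  from assms have "Z \<inter> M1 = Z \<inter> M1'" "Z \<inter> M2 = Z \<inter> M2'" by blast+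
  then show ?thesis unfolding parity_type_def by simp
qed

lemma good_colouring_cong:
  assumes "M1 \<inter> C = M1' \<inter> C" "M2 \<inter> C = M2' \<inter> C"
  shows "good_colouring S M1 M2 C \<longleftrightarrow> good_colouring S M1' M2' C"
proof -
  have "mixed_children S (parity_type M1 M2) Z \<longleftrightarrow> mixed_children S (parity_type M1' M2') Z"
    if "Z \<subseteq> C" for Z
  proof -
    have "parity_type M1 M2 D = parity_type M1' M2' D" if "lam_child S D Z" for D
      using parity_type_cong[OF _ assms] that \<open>Z \<subseteq> C\<close> unfolding lam_child_def by blast
    then show ?thesis unfolding mixed_children_def by metis
  qed
  then show ?thesis
    unfolding good_colouring_def using parity_type_cong[OF _ assms] by metis
qed

lemma sum_mod_2_distinguished:
  fixes f :: "'a \<Rightarrow> nat"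
  assumes "finite I" "k \<in> I" "\<And>i. i \<in> I \<Longrightarrow> i \<noteq> k \<Longrightarrow> f i mod 2 = b"
  shows "(\<Sum>i\<in>I. f i) mod 2 = (f k + (card I - 1) * b) mod 2"
proof -
  have "(\<Sum>i\<in>I - {k}. f i) mod 2 = (\<Sum>i\<in>I - {k}. f i mod 2) mod 2"
    by (simp add: mod_sum_eq)
  also have "\<dots> = ((card I - 1) * b) mod 2"
    using assms by simp
  finally show ?thesis
    using sum.remove[OF assms(1,2), of f] by (metis mod_add_right_eq)
qed

text \<open>Types for the children of a node of type \<open>t\<close>: one child gets \<open>v\<close> and the \<open>m\<close> others get
  \<open>u\<close>, so that the types add up to \<open>t\<close>; \<open>u \<noteq> v\<close> keeps the children mixed.\<close>
lemma nonzero_type_targets: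
  assumes "t \<in> nonzero_types"
  obtains u v where "u \<in> nonzero_types" "v \<in> nonzero_types" "u \<noteq> v"
    "(fst v + m * fst u) mod 2 = fst t" "(snd v + m * snd u) mod 2 = snd t"
proof (cases "even m")
  case True
  then obtain k where "m = 2 * k" by blast
  then show thesis
    using that[of "if t = (1, 0) then (0, 1) else (1, 0)" t] assms
    by (auto simp: nonzero_types_def)
next
  case False
  then obtain k where m: "m = 2 * k + 1" using oddE by blast
  from assms consider "t = (1, 0)" | "t = (0, 1)" | "t = (1, 1)"
    unfolding nonzero_types_def by blast
  then show thesis
  proof cases
    case 1
    then show thesis using that[of "(1, 1)" "(0, 1)"] m by (simp add: nonzero_types_def)
  next
    case 2
    then show thesis using that[of "(1, 1)" "(1, 0)"] m by (simp add: nonzero_types_def)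
  next
    case 3
    then show thesis using that[of "(1, 0)" "(0, 1)"] m by (simp add: nonzero_types_def)
  qed
qed

definition type_code :: "nat \<Rightarrow> nat \<times> nat" where
  "type_code i = (if i = 0 then (1, 0) else if i = 1 then (0, 1) else (1, 1))"

lemma type_code_bij: "bij_betw type_code {..<3} nonzero_types"
proof -
  have "{..<3} = {0, 1, 2::nat}" by auto
  then show ?thesis unfolding bij_betw_def inj_on_def nonzero_types_def type_code_def by auto
qed

lemma type_code_bits: "type_code i \<in> {..<2} \<times> {..<2}"
  by (simp add: type_code_def)

text \<open>As the nodes containing
  \<open>a\<close> form a chain, \<open>a\<close> and \<open>t\<close> determine \<open>X\<close>, and this is expressible in MSO.\<close>
definition type_rep :: "'e set set \<Rightarrow> ('e set \<Rightarrow> 'b) \<Rightarrow> 'b \<Rightarrow> 'e \<Rightarrow> 'e set \<Rightarrow> bool" where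
  "type_rep S T t a X \<longleftrightarrow> X \<in> S \<and> a \<in> X \<and> X \<noteq> {a} \<and> T X = t \<and>
     (\<forall>Z\<in>S. a \<in> Z \<longrightarrow> Z \<subset> X \<longrightarrow> Z \<noteq> {a} \<longrightarrow> T Z \<noteq> t)"

context laminar_system
begin

lemma good_colouring_singleton: "good_colouring S M1 M2 {a}"
  unfolding good_colouring_def internal_def using member_nonempty by (metis subset_singletonD)

lemma good_colouring_step:
  assumes Y: "internal S Y"
    and children: "\<And>C. lam_child S C Y \<Longrightarrow> good_colouring S M1 M2 C"
    and nonzero: "parity_type M1 M2 Y \<noteq> (0, 0)"
    and C1: "lam_child S C1 Y" and C2: "lam_child S C2 Y"
    and distinct: "parity_type M1 M2 C1 \<noteq> parity_type M1 M2 C2"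
  shows "good_colouring S M1 M2 Y"
  unfolding good_colouring_def
proof (intro allI impI)
  fix Z assume Z: "internal S Z" "Z \<subseteq> Y"
  show "parity_type M1 M2 Z \<noteq> (0, 0) \<and> mixed_children S (parity_type M1 M2) Z"
  proof (cases "Z = Y")
    case True
    have "mixed_children S (parity_type M1 M2) Y"
      unfolding mixed_children_def using C1 C2 distinct by metis
    with True nonzero show ?thesis by simp
  next
    case False
    with Z Y obtain C where "lam_child S C Y" "Z \<subseteq> C"
      using lam_child_above[of Z Y] unfolding internal_def by blast
    with children Z show ?thesis unfolding good_colouring_def by blast
  qed
qed

lemma finite_children: "finite {C. lam_child S C Y}"
  using finite_family by (rule finite_subset[rotated]) (auto simp: lam_child_def)

lemma card_Int_children:
  assumes "internal S Y"
  shows "card (Y \<inter> M) = (\<Sum>C\<in>{C. lam_child S C Y}. card (C \<inter> M))"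
proof -
  let ?Ch = "{C. lam_child S C Y}"
  have "finite ?Ch" by (rule finite_children)
  moreover have "\<forall>C\<in>?Ch. finite (C \<inter> M)"
    using finite_member unfolding lam_child_def by blast
  moreover have "\<forall>C\<in>?Ch. \<forall>C'\<in>?Ch. C \<noteq> C' \<longrightarrow> (C \<inter> M) \<inter> (C' \<inter> M) = {}"
    using lam_child_disjoint by blast
  ultimately have "card (\<Union>C\<in>?Ch. C \<inter> M) = (\<Sum>C\<in>?Ch. card (C \<inter> M))"
    by (rule card_UN_disjoint)
  moreover have "(\<Union>C\<in>?Ch. C \<inter> M) = Y \<inter> M"
    using children_partition[OF assms] by blast
  ultimately show ?thesis by simp
qed

lemma parity_type_from_children:
  assumes Y: "internal S Y" and c0: "lam_child S c0 Y"
    and others: "\<And>C. lam_child S C Y \<Longrightarrow> C \<noteq> c0 \<Longrightarrow> parity_type M1 M2 C = u"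
  shows "parity_type M1 M2 Y =
    ((fst (parity_type M1 M2 c0) + (card {C. lam_child S C Y} - 1) * fst u) mod 2,
     (snd (parity_type M1 M2 c0) + (card {C. lam_child S C Y} - 1) * snd u) mod 2)"
proof -
  let ?n = "card {C. lam_child S C Y} - 1"
  have "card (Y \<inter> M) mod 2 = (card (c0 \<inter> M) mod 2 + ?n * b) mod 2"
    if "\<And>C. lam_child S C Y \<Longrightarrow> C \<noteq> c0 \<Longrightarrow> card (C \<inter> M) mod 2 = b" for M b
    using card_Int_children[OF Y, of M] that c0
      sum_mod_2_distinguished[where I = "{C. lam_child S C Y}" and k = c0 and f = "\<lambda>C. card (C \<inter> M)"]
      finite_children
    by (simp add: mod_add_left_eq)
  moreover have "card (C \<inter> M1) mod 2 = fst u" "card (C \<inter> M2) mod 2 = snd u"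
    if "lam_child S C Y" "C \<noteq> c0" for C
    using others[OF that] unfolding parity_type_def by (auto simp: prod_eq_iff)
  ultimately show ?thesis unfolding parity_type_def by simp
qed

lemma Union_children_Int:
  assumes C: "lam_child S C Y" and g: "\<And>C'. lam_child S C' Y \<Longrightarrow> g C' \<subseteq> C'"
  shows "(\<Union>C'\<in>{C'. lam_child S C' Y}. g C') \<inter> C = g C"
proof -
  have "g C' \<inter> C = {}" if "lam_child S C' Y" "C' \<noteq> C" for C'
    using lam_child_disjoint[OF that(1) C that(2)] g[OF that(1)] by blast
  with C g[OF C] show ?thesis by blast
qed

lemma glue_child_colourings:
  assumes "\<And>C. lam_child S C Y \<Longrightarrow>
    \<exists>M1 M2. M1 \<subseteq> C \<and> M2 \<subseteq> C \<and> parity_type M1 M2 C = target C \<and> good_colouring S M1 M2 C"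
  shows "\<exists>M1 M2. M1 \<subseteq> Y \<and> M2 \<subseteq> Y \<and>
    (\<forall>C. lam_child S C Y \<longrightarrow> parity_type M1 M2 C = target C \<and> good_colouring S M1 M2 C)"
proof -
  have "\<exists>M. fst M \<subseteq> C \<and> snd M \<subseteq> C \<and> parity_type (fst M) (snd M) C = target C \<and>
      good_colouring S (fst M) (snd M) C" if "lam_child S C Y" for C
  proof -
    from assms[OF that] obtain M1 M2 where
      "M1 \<subseteq> C" "M2 \<subseteq> C" "parity_type M1 M2 C = target C" "good_colouring S M1 M2 C"
      by blast
    then show ?thesis by (intro exI[of _ "(M1, M2)"]) simp
  qed
  then have "\<forall>C. \<exists>M. lam_child S C Y \<longrightarrow> fst M \<subseteq> C \<and> snd M \<subseteq> C \<and>
      parity_type (fst M) (snd M) C = target C \<and> good_colouring S (fst M) (snd M) C"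
    by blast
  then obtain M where M: "\<forall>C. lam_child S C Y \<longrightarrow> fst (M C) \<subseteq> C \<and> snd (M C) \<subseteq> C \<and>
      parity_type (fst (M C)) (snd (M C)) C = target C \<and> good_colouring S (fst (M C)) (snd (M C)) C"
    by (rule choice[THEN exE])
  define M1 where "M1 = (\<Union>C\<in>{C. lam_child S C Y}. fst (M C))"
  define M2 where "M2 = (\<Union>C\<in>{C. lam_child S C Y}. snd (M C))"
  have "fst (M C) \<subseteq> Y" "snd (M C) \<subseteq> Y" if C: "lam_child S C Y" for C
  proof -
    from M C have "fst (M C) \<subseteq> C" "snd (M C) \<subseteq> C" by blast+
    moreover from C have "C \<subseteq> Y" unfolding lam_child_def by auto
    ultimately show "fst (M C) \<subseteq> Y" "snd (M C) \<subseteq> Y" by auto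
  qed
  then have "M1 \<subseteq> Y" "M2 \<subseteq> Y" unfolding M1_def M2_def UN_subset_iff by simp_all
  moreover have "parity_type M1 M2 C = target C \<and> good_colouring S M1 M2 C" if C: "lam_child S C Y" for C
  proof -
    from M C have MC: "fst (M C) \<subseteq> C" "snd (M C) \<subseteq> C"
      "parity_type (fst (M C)) (snd (M C)) C = target C" "good_colouring S (fst (M C)) (snd (M C)) C"
      by blast+
    have "\<And>C'. lam_child S C' Y \<Longrightarrow> fst (M C') \<subseteq> C'" "\<And>C'. lam_child S C' Y \<Longrightarrow> snd (M C') \<subseteq> C'"
      using M by blast+
    then have "M1 \<inter> C = fst (M C) \<inter> C" "M2 \<inter> C = snd (M C) \<inter> C"
      unfolding M1_def M2_def using Union_children_Int[OF C] MC(1,2) by (simp_all add: Int_absorb2)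
    with MC(3,4) show ?thesis
      using parity_type_cong[of C C M1 "fst (M C)" M2 "snd (M C)"]
        good_colouring_cong[of M1 C "fst (M C)" M2 "snd (M C)" S]
      by simp
  qed
  ultimately show ?thesis by blast
qed

lemma good_colouring_internal:
  assumes Y: "internal S Y" and t: "t \<in> nonzero_types"
    and children: "\<And>C t. lam_child S C Y \<Longrightarrow> t \<in> nonzero_types \<Longrightarrow>
      \<exists>M1 M2. M1 \<subseteq> C \<and> M2 \<subseteq> C \<and> parity_type M1 M2 C = t \<and> good_colouring S M1 M2 C"
  shows "\<exists>M1 M2. M1 \<subseteq> Y \<and> M2 \<subseteq> Y \<and> parity_type M1 M2 Y = t \<and> good_colouring S M1 M2 Y"
proof -
  let ?Ch = "{C. lam_child S C Y}"
  obtain c0 c1 where c0: "lam_child S c0 Y" and c1: "lam_child S c1 Y" and "c0 \<noteq> c1"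
    using internal_two_children[OF Y] by blast
  obtain u v where uv: "u \<in> nonzero_types" "v \<in> nonzero_types" "u \<noteq> v"
    "(fst v + (card ?Ch - 1) * fst u) mod 2 = fst t" "(snd v + (card ?Ch - 1) * snd u) mod 2 = snd t"
    using nonzero_type_targets[OF t] by blast
  define target where "target C = (if C = c0 then v else u)" for C
  have target: "target C \<in> nonzero_types" for C using uv unfolding target_def by simp
  have "\<exists>M1 M2. M1 \<subseteq> C \<and> M2 \<subseteq> C \<and> parity_type M1 M2 C = target C \<and> good_colouring S M1 M2 C"
    if "lam_child S C Y" for C
    using children[OF that target] .
  from glue_child_colourings[where target = target and Y = Y, OF this] obtain M1 M2 where M12: "M1 \<subseteq> Y" "M2 \<subseteq> Y"
    and glued: "\<forall>C. lam_child S C Y \<longrightarrow> parity_type M1 M2 C = target C \<and> good_colouring S M1 M2 C"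
    by blast
  then have type_C: "\<And>C. lam_child S C Y \<Longrightarrow> parity_type M1 M2 C = target C"
    and good_C: "\<And>C. lam_child S C Y \<Longrightarrow> good_colouring S M1 M2 C"
    by blast+
  have type_Y: "parity_type M1 M2 Y = t"
    using parity_type_from_children[OF Y c0, of M1 M2 u] type_C c0 uv(4,5) unfolding target_def by simp
  have "good_colouring S M1 M2 Y"
  proof (rule good_colouring_step[OF Y good_C _ c0 c1])
    show "parity_type M1 M2 Y \<noteq> (0, 0)" using type_Y t unfolding nonzero_types_def by auto
    show "parity_type M1 M2 c0 \<noteq> parity_type M1 M2 c1"
      using type_C c0 c1 \<open>c0 \<noteq> c1\<close> uv(3) unfolding target_def by auto
  qed
  with M12 type_Y show ?thesis by blast
qed

lemma good_colouring_exists: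
  assumes "Y \<in> S" "t \<in> nonzero_types"
  shows "\<exists>M1 M2. M1 \<subseteq> Y \<and> M2 \<subseteq> Y \<and> parity_type M1 M2 Y = t \<and> good_colouring S M1 M2 Y"
  using assms
proof (induction "card Y" arbitrary: Y t rule: less_induct)
  case less
  show ?case
  proof (cases "internal S Y")
    case True
    show ?thesis
    proof (rule good_colouring_internal[OF True less.prems(2)])
      fix C t' assume "lam_child S C Y" "t' \<in> nonzero_types"
      moreover from \<open>lam_child S C Y\<close> have "card C < card Y" "C \<in> S"
        using lam_child_card_less finite_member less.prems(1) unfolding lam_child_def by auto
      ultimately show "\<exists>M1 M2. M1 \<subseteq> C \<and> M2 \<subseteq> C \<and> parity_type M1 M2 C = t' \<and> good_colouring S M1 M2 C"
        using less.hyps by simp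
    qed
  next
    case False
    with less.prems obtain a where a: "Y = {a}" using non_internal_singleton by blast
    let ?M1 = "if fst t = 1 then {a} else {}" and ?M2 = "if snd t = 1 then {a} else {}"
    have "parity_type ?M1 ?M2 Y = t"
      using less.prems(2) a unfolding parity_type_def nonzero_types_def by auto
    with a good_colouring_singleton show ?thesis by (intro exI[of _ ?M1] exI[of _ ?M2]) auto
  qed
qed

lemma good_parity_colouring_exists:
  "\<exists>M1 M2. M1 \<subseteq> U \<and> M2 \<subseteq> U \<and> (\<forall>Z. internal S Z \<longrightarrow>
     mixed_children S (parity_type M1 M2) Z \<and> parity_type M1 M2 Z \<in> nonzero_types)"
proof -
  obtain M1 M2 where M12: "M1 \<subseteq> U" "M2 \<subseteq> U" and good: "good_colouring S M1 M2 U"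
    using good_colouring_exists[OF top_member, of "(1, 1)"] by (auto simp: nonzero_types_def)
  have "mixed_children S (parity_type M1 M2) Z \<and> parity_type M1 M2 Z \<in> nonzero_types"
    if Z: "internal S Z" for Z
  proof -
    have "Z \<subseteq> U" using Z member_subset unfolding internal_def by blast
    with good Z have "parity_type M1 M2 Z \<noteq> (0, 0)" "mixed_children S (parity_type M1 M2) Z"
      unfolding good_colouring_def by blast+
    moreover have "parity_type M1 M2 Z \<noteq> (0, 0) \<Longrightarrow> parity_type M1 M2 Z \<in> nonzero_types"
      unfolding parity_type_def nonzero_types_def by auto
    ultimately show ?thesis by blast
  qed
  with M12 show ?thesis by blast
qed

lemma type_rep_unique:
  assumes "type_rep S T t a X" "type_rep S T t a X'"
  shows "X = X'"
proof -
  from assms have "X \<in> S" "X' \<in> S" "a \<in> X \<inter> X'" unfolding type_rep_def by auto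
  then have "X \<subseteq> X' \<or> X' \<subseteq> X" using nested by blast
  with assms show ?thesis unfolding type_rep_def by blast
qed

text \<open>Descend from \<open>Y\<close>, always into a child whose type differs from \<open>t\<close>.\<close>
lemma leaf_avoiding_type:
  assumes mixed: "\<And>Z. internal S Z \<Longrightarrow> mixed_children S T Z"
  shows "Y \<in> S \<Longrightarrow> \<not> internal S Y \<or> T Y \<noteq> t \<Longrightarrow>
    \<exists>a\<in>Y. \<forall>Z\<in>S. a \<in> Z \<longrightarrow> Z \<subseteq> Y \<longrightarrow> Z \<noteq> {a} \<longrightarrow> T Z \<noteq> t"
proof (induction "card Y" arbitrary: Y rule: less_induct)
  case less
  show ?case
  proof (cases "internal S Y")
    case False
    with less.prems obtain b where "Y = {b}" using non_internal_singleton by blast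
    then show ?thesis by (auto dest: subset_singletonD)
  next
    case True
    with less.prems have TY: "T Y \<noteq> t" by simp
    obtain C where C: "lam_child S C Y" "T C \<noteq> t"
      using mixed[OF True] unfolding mixed_children_def by blast
    have "card C < card Y" "C \<in> S"
      using C(1) lam_child_card_less finite_member less.prems(1) unfolding lam_child_def by auto
    then obtain a where a: "a \<in> C" "\<forall>Z\<in>S. a \<in> Z \<longrightarrow> Z \<subseteq> C \<longrightarrow> Z \<noteq> {a} \<longrightarrow> T Z \<noteq> t"
      using less.hyps C(2) by blast
    have "T Z \<noteq> t" if "Z \<in> S" "a \<in> Z" "Z \<subseteq> Y" "Z \<noteq> {a}" for Z
      using below_lam_child[OF C(1) that(1,3)] that a TY by blast
    moreover have "a \<in> Y" using a C(1) unfolding lam_child_def by auto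
    ultimately show ?thesis by blast
  qed
qed

lemma type_rep_exists:
  assumes mixed: "\<And>Z. internal S Z \<Longrightarrow> mixed_children S T Z" and X: "internal S X"
  obtains a where "type_rep S T (T X) a X"
proof -
  obtain C where C: "lam_child S C X" "T C \<noteq> T X"
    using mixed[OF X] unfolding mixed_children_def by blast
  then obtain a where a: "a \<in> C" "\<forall>Z\<in>S. a \<in> Z \<longrightarrow> Z \<subseteq> C \<longrightarrow> Z \<noteq> {a} \<longrightarrow> T Z \<noteq> T X"
    using leaf_avoiding_type[OF mixed, of C "T X"] unfolding lam_child_def by blast
  have "T Z \<noteq> T X" if "Z \<in> S" "a \<in> Z" "Z \<subset> X" "Z \<noteq> {a}" for Z
    using below_lam_child[OF C(1) that(1)] that a by blast
  moreover have "a \<in> X" using a C(1) unfolding lam_child_def by auto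
  ultimately have "type_rep S T (T X) a X"
    using X unfolding type_rep_def internal_def by blast
  then show thesis by (rule that)
qed

end

definition representative_selection :: "'e set set \<Rightarrow> (nat \<Rightarrow> 'e set) \<Rightarrow> bool" where
  "representative_selection S M \<longleftrightarrow>
     (\<forall>Y. internal S Y \<longrightarrow> (\<exists>i<3. \<exists>a\<in>M (i + 2). type_rep S (parity_type (M 0) (M 1)) (type_code i) a Y)) \<and>
     (\<forall>i<3. \<forall>a\<in>M (i + 2). \<forall>b\<in>M (i + 2). \<forall>Y.
        type_rep S (parity_type (M 0) (M 1)) (type_code i) a Y \<longrightarrow>
        type_rep S (parity_type (M 0) (M 1)) (type_code i) b Y \<longrightarrow> a = b)"

context laminar_system
begin

lemma representative_selection_of_reps:
  assumes nonzero: "\<And>Y. internal S Y \<Longrightarrow> parity_type (M 0) (M 1) Y \<in> nonzero_types"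
    and rep: "\<And>Y. internal S Y \<Longrightarrow>
      type_rep S (parity_type (M 0) (M 1)) (parity_type (M 0) (M 1) Y) (rep Y) Y"
    and M_rep: "\<And>i. M (i + 2) = {rep Y | Y. internal S Y \<and> parity_type (M 0) (M 1) Y = type_code i}"
  shows "representative_selection S M"
  unfolding representative_selection_def
proof (intro conjI allI impI ballI)
  let ?T = "parity_type (M 0) (M 1)"
  fix Y assume Y: "internal S Y"
  obtain i where "i < 3" "?T Y = type_code i"
    using nonzero[OF Y] type_code_bij unfolding bij_betw_def by force
  with Y rep[OF Y] show "\<exists>i<3. \<exists>a\<in>M (i + 2). type_rep S ?T (type_code i) a Y"
    unfolding M_rep by auto
next
  let ?T = "parity_type (M 0) (M 1)"
  fix i a b Y
  assume "i < 3" "a \<in> M (i + 2)" "b \<in> M (i + 2)"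
    and a: "type_rep S ?T (type_code i) a Y" and b: "type_rep S ?T (type_code i) b Y"
  then obtain Ya Yb where "a = rep Ya" "internal S Ya" "?T Ya = type_code i"
    and "b = rep Yb" "internal S Yb" "?T Yb = type_code i"
    unfolding M_rep by blast
  with rep a b have "Ya = Y" "Yb = Y" using type_rep_unique by metis+
  with \<open>a = rep Ya\<close> \<open>b = rep Yb\<close> show "a = b" by simp
qed

lemma representative_selection_exists:
  obtains M where "\<And>j. M j \<subseteq> U" "representative_selection S M"
proof -
  obtain M1 M2 where M12: "M1 \<subseteq> U" "M2 \<subseteq> U"
    and mixed_nonzero: "\<forall>Z. internal S Z \<longrightarrow>
      mixed_children S (parity_type M1 M2) Z \<and> parity_type M1 M2 Z \<in> nonzero_types"
    using good_parity_colouring_exists by blast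
  define rep where "rep Y = (SOME a. type_rep S (parity_type M1 M2) (parity_type M1 M2 Y) a Y)" for Y
  have rep: "type_rep S (parity_type M1 M2) (parity_type M1 M2 Y) (rep Y) Y" if "internal S Y" for Y
    unfolding rep_def using type_rep_exists mixed_nonzero that by (metis someI)
  define M where "M j = (if j = 0 then M1 else if j = 1 then M2
      else {rep Y | Y. internal S Y \<and> parity_type M1 M2 Y = type_code (j - 2)})" for j :: nat
  have "rep Y \<in> U" if "internal S Y" for Y
    using rep[OF that] member_subset unfolding type_rep_def by blast
  with M12 have "M j \<subseteq> U" for j unfolding M_def by auto
  moreover have "representative_selection S M"
    by (rule representative_selection_of_reps[where rep = rep]) (use mixed_nonzero rep in \<open>simp_all add: M_def\<close>)
  ultimately show thesis using that by blast
qed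

end

section \<open>Formulas\<close>

definition Disj :: "form \<Rightarrow> form \<Rightarrow> form" where "Disj \<phi> \<psi> = Neg (Conj (Neg \<phi>) (Neg \<psi>))"
definition Impl :: "form \<Rightarrow> form \<Rightarrow> form" where "Impl \<phi> \<psi> = Neg (Conj \<phi> (Neg \<psi>))"
definition Iff :: "form \<Rightarrow> form \<Rightarrow> form" where "Iff \<phi> \<psi> = Conj (Impl \<phi> \<psi>) (Impl \<psi> \<phi>)"
definition AllFO :: "nat \<Rightarrow> form \<Rightarrow> form" where "AllFO x \<phi> = Neg (ExFO x (Neg \<phi>))"
definition AllSO :: "nat \<Rightarrow> form \<Rightarrow> form" where "AllSO X \<phi> = Neg (ExSO X (Neg \<phi>))"

lemma sat_Disj [simp]: "sat E v V (Disj \<phi> \<psi>) \<longleftrightarrow> sat E v V \<phi> \<or> sat E v V \<psi>"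
  by (simp add: Disj_def)
lemma sat_Impl [simp]: "sat E v V (Impl \<phi> \<psi>) \<longleftrightarrow> (sat E v V \<phi> \<longrightarrow> sat E v V \<psi>)"
  by (simp add: Impl_def)
lemma sat_Iff [simp]: "sat E v V (Iff \<phi> \<psi>) \<longleftrightarrow> (sat E v V \<phi> \<longleftrightarrow> sat E v V \<psi>)"
  by (auto simp add: Iff_def)
lemma sat_AllFO [simp]: "sat E v V (AllFO x \<phi>) \<longleftrightarrow> (\<forall>a\<in>univ E. sat E (v(x := a)) V \<phi>)"
  by (simp add: AllFO_def)
lemma sat_AllSO [simp]: "sat E v V (AllSO X \<phi>) \<longleftrightarrow> (\<forall>Y. Y \<subseteq> univ E \<longrightarrow> sat E v (V(X := Y)) \<phi>)"
  by (simp add: AllSO_def)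

lemma free_Disj [simp]:
  "fo_free (Disj \<phi> \<psi>) = fo_free \<phi> \<union> fo_free \<psi>" "so_free (Disj \<phi> \<psi>) = so_free \<phi> \<union> so_free \<psi>"
  by (simp_all add: Disj_def)
lemma free_Impl [simp]:
  "fo_free (Impl \<phi> \<psi>) = fo_free \<phi> \<union> fo_free \<psi>" "so_free (Impl \<phi> \<psi>) = so_free \<phi> \<union> so_free \<psi>"
  by (simp_all add: Impl_def)
lemma free_Iff [simp]:
  "fo_free (Iff \<phi> \<psi>) = fo_free \<phi> \<union> fo_free \<psi>" "so_free (Iff \<phi> \<psi>) = so_free \<phi> \<union> so_free \<psi>"
  by (auto simp add: Iff_def)
lemma free_AllFO [simp]: "fo_free (AllFO x \<phi>) = fo_free \<phi> - {x}" "so_free (AllFO x \<phi>) = so_free \<phi>"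
  by (simp_all add: AllFO_def)
lemma free_AllSO [simp]: "fo_free (AllSO X \<phi>) = fo_free \<phi>" "so_free (AllSO X \<phi>) = so_free \<phi> - {X}"
  by (simp_all add: AllSO_def)

definition FalseF :: form where "FalseF = ExFO 0 (Neg (Eq 0 0))"
definition Disjs :: "nat \<Rightarrow> (nat \<Rightarrow> form) \<Rightarrow> form" where
  "Disjs n F = foldr (\<lambda>i. Disj (F i)) [0..<n] FalseF"
definition Conjs :: "nat \<Rightarrow> (nat \<Rightarrow> form) \<Rightarrow> form" where
  "Conjs n F = foldr (\<lambda>i. Conj (F i)) [0..<n] (Neg FalseF)"

lemma sat_Disjs [simp]: "sat E v V (Disjs n F) \<longleftrightarrow> (\<exists>i<n. sat E v V (F i))"
proof -
  have "sat E v V (foldr (\<lambda>i. Disj (F i)) is FalseF) \<longleftrightarrow> (\<exists>i\<in>set is. sat E v V (F i))" for "is"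
    by (induction "is") (auto simp: FalseF_def)
  then show ?thesis unfolding Disjs_def by auto
qed

lemma sat_Conjs [simp]: "sat E v V (Conjs n F) \<longleftrightarrow> (\<forall>i<n. sat E v V (F i))"
proof -
  have "sat E v V (foldr (\<lambda>i. Conj (F i)) is (Neg FalseF)) \<longleftrightarrow> (\<forall>i\<in>set is. sat E v V (F i))" for "is"
    by (induction "is") (auto simp: FalseF_def)
  then show ?thesis unfolding Conjs_def by auto
qed

lemma free_Disjs [simp]:
  "fo_free (Disjs n F) = (\<Union>i<n. fo_free (F i))" "so_free (Disjs n F) = (\<Union>i<n. so_free (F i))"
proof -
  have "fo_free (foldr (\<lambda>i. Disj (F i)) is FalseF) = (\<Union>i\<in>set is. fo_free (F i)) \<and>
      so_free (foldr (\<lambda>i. Disj (F i)) is FalseF) = (\<Union>i\<in>set is. so_free (F i))" for "is"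
    by (induction "is") (auto simp: FalseF_def)
  then show "fo_free (Disjs n F) = (\<Union>i<n. fo_free (F i))" "so_free (Disjs n F) = (\<Union>i<n. so_free (F i))"
    unfolding Disjs_def by (auto simp: atLeast0LessThan)
qed

lemma free_Conjs [simp]:
  "fo_free (Conjs n F) = (\<Union>i<n. fo_free (F i))" "so_free (Conjs n F) = (\<Union>i<n. so_free (F i))"
proof -
  have "fo_free (foldr (\<lambda>i. Conj (F i)) is (Neg FalseF)) = (\<Union>i\<in>set is. fo_free (F i)) \<and>
      so_free (foldr (\<lambda>i. Conj (F i)) is (Neg FalseF)) = (\<Union>i\<in>set is. so_free (F i))" for "is"
    by (induction "is") (auto simp: FalseF_def)
  then show "fo_free (Conjs n F) = (\<Union>i<n. fo_free (F i))" "so_free (Conjs n F) = (\<Union>i<n. so_free (F i))"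
    unfolding Conjs_def by (auto simp: atLeast0LessThan)
qed

text \<open>The first-order variable 9 and the set variables 7 and 8 are reserved as bound
  variables of the formulas below.\<close>

definition SubsetF :: "nat \<Rightarrow> nat \<Rightarrow> form" where
  "SubsetF X Y = AllFO 9 (Impl (Mem 9 X) (Mem 9 Y))"
definition HasOther :: "nat \<Rightarrow> nat \<Rightarrow> form" where
  "HasOther x X = ExFO 9 (Conj (Mem 9 X) (Neg (Eq 9 x)))"
definition IsSingleton :: "nat \<Rightarrow> nat \<Rightarrow> form" where
  "IsSingleton x X = AllFO 9 (Iff (Mem 9 X) (Eq 9 x))"
definition InSET :: "nat \<Rightarrow> form" where
  "InSET X = SetAtom SET [X]"
definition Coloured :: "string \<Rightarrow> nat \<Rightarrow> form" where
  "Coloured c x = RelAtom (RelSym c 1) [x]"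
definition Linked :: "string \<Rightarrow> nat \<Rightarrow> nat \<Rightarrow> form" where
  "Linked n x y = RelAtom (RelSym n 2) [x, y]"
definition OddIn :: "string \<Rightarrow> nat \<Rightarrow> form" where
  "OddIn c Z = ExSO 8 (Conj (AllFO 9 (Iff (Mem 9 8) (Conj (Mem 9 Z) (Coloured c 9)))) (Neg (Even 8)))"
definition HasType :: "string \<Rightarrow> string \<Rightarrow> nat \<times> nat \<Rightarrow> nat \<Rightarrow> form" where
  "HasType c1 c2 t Z =
     Conj (if fst t = 1 then OddIn c1 Z else Neg (OddIn c1 Z))
          (if snd t = 1 then OddIn c2 Z else Neg (OddIn c2 Z))"
definition TypeRep :: "string \<Rightarrow> string \<Rightarrow> nat \<times> nat \<Rightarrow> nat \<Rightarrow> nat \<Rightarrow> form" where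
  "TypeRep c1 c2 t x X =
     Conj (InSET X) (Conj (Mem x X) (Conj (HasOther x X) (Conj (HasType c1 c2 t X)
       (AllSO 7 (Impl (Conj (InSET 7) (Conj (Mem x 7) (Conj (SubsetF 7 X)
                        (Conj (Neg (SubsetF X 7)) (HasOther x 7)))))
                      (Neg (HasType c1 c2 t 7)))))))"

lemma free_basic [simp]:
  "fo_free (SubsetF X Y) = {}" "so_free (SubsetF X Y) = {X, Y}"
  "fo_free (HasOther x X) = {x} - {9}" "so_free (HasOther x X) = {X}"
  "fo_free (IsSingleton x X) = {x} - {9}" "so_free (IsSingleton x X) = {X}"
  "fo_free (InSET X) = {}" "so_free (InSET X) = {X}"
  "fo_free (Coloured c x) = {x}" "so_free (Coloured c x) = {}"
  "fo_free (Linked n x y) = {x, y}" "so_free (Linked n x y) = {}"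
  "fo_free (OddIn c Z) = {}" "so_free (OddIn c Z) = {Z} - {8}"
  "fo_free (HasType c1 c2 t Z) = {}" "so_free (HasType c1 c2 t Z) = {Z} - {8}"
  by (auto simp: SubsetF_def HasOther_def IsSingleton_def InSET_def Coloured_def Linked_def
      OddIn_def HasType_def)

lemma free_TypeRep:
  assumes "x \<noteq> 9" "X \<noteq> 7" "X \<noteq> 8"
  shows "fo_free (TypeRep c1 c2 t x X) = {x}" "so_free (TypeRep c1 c2 t x X) = {X}"
  using assms by (auto simp: TypeRep_def)

definition interprets_colour :: "'e struct \<Rightarrow> string \<Rightarrow> 'e set \<Rightarrow> bool" where
  "interprets_colour E c M \<longleftrightarrow> (\<forall>a. [a] \<in> rels E (RelSym c 1) \<longleftrightarrow> a \<in> M)"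

definition interprets_SET :: "'e struct \<Rightarrow> 'e set set \<Rightarrow> bool" where
  "interprets_SET E S \<longleftrightarrow> (\<forall>X. [X] \<in> sets E SET \<longleftrightarrow> X \<in> S) \<and> (\<forall>X\<in>S. X \<subseteq> univ E)"

lemma sat_SubsetF: "V X \<subseteq> univ E \<Longrightarrow> sat E v V (SubsetF X Y) \<longleftrightarrow> V X \<subseteq> V Y"
  by (auto simp: SubsetF_def)
lemma sat_HasOther: "x \<noteq> 9 \<Longrightarrow> V X \<subseteq> univ E \<Longrightarrow> sat E v V (HasOther x X) \<longleftrightarrow> \<not> V X \<subseteq> {v x}"
  by (auto simp: HasOther_def)
lemma sat_IsSingleton:
  "x \<noteq> 9 \<Longrightarrow> V X \<subseteq> univ E \<Longrightarrow> v x \<in> univ E \<Longrightarrow> sat E v V (IsSingleton x X) \<longleftrightarrow> V X = {v x}"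
  by (auto simp: IsSingleton_def)
lemma sat_InSET: "interprets_SET E S \<Longrightarrow> sat E v V (InSET X) \<longleftrightarrow> V X \<in> S"
  by (simp add: InSET_def interprets_SET_def)
lemma sat_Coloured: "interprets_colour E c M \<Longrightarrow> sat E v V (Coloured c x) \<longleftrightarrow> v x \<in> M"
  by (simp add: Coloured_def interprets_colour_def)
lemma sat_Linked [simp]: "sat E v V (Linked n x y) \<longleftrightarrow> [v x, v y] \<in> rels E (RelSym n 2)"
  by (simp add: Linked_def)

lemma sat_OddIn:
  assumes "Z \<noteq> 8" "interprets_colour E c M" "V Z \<subseteq> univ E"
  shows "sat E v V (OddIn c Z) \<longleftrightarrow> odd (card (V Z \<inter> M))"
proof -
  have "sat E v V (OddIn c Z) \<longleftrightarrow>
      (\<exists>W. W \<subseteq> univ E \<and> (\<forall>b\<in>univ E. b \<in> W \<longleftrightarrow> b \<in> V Z \<and> b \<in> M) \<and> odd (card W))"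
    using assms(1) sat_Coloured[OF assms(2)] by (simp add: OddIn_def)
  also have "\<dots> \<longleftrightarrow> odd (card (V Z \<inter> M))"
  proof
    assume "\<exists>W. W \<subseteq> univ E \<and> (\<forall>b\<in>univ E. b \<in> W \<longleftrightarrow> b \<in> V Z \<and> b \<in> M) \<and> odd (card W)"
    then obtain W where W: "W \<subseteq> univ E" "\<forall>b\<in>univ E. b \<in> W \<longleftrightarrow> b \<in> V Z \<and> b \<in> M" "odd (card W)"
      by blast
    from W(1,2) assms(3) have "W = V Z \<inter> M" by blast
    with W(3) show "odd (card (V Z \<inter> M))" by simp
  qed (use assms(3) in \<open>intro exI[of _ "V Z \<inter> M"], auto\<close>)
  finally show ?thesis .
qed

lemma sat_HasType:
  assumes "Z \<noteq> 8" "interprets_colour E c1 M1" "interprets_colour E c2 M2" "V Z \<subseteq> univ E"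
    and "t \<in> {..<2} \<times> {..<2}"
  shows "sat E v V (HasType c1 c2 t Z) \<longleftrightarrow> parity_type M1 M2 (V Z) = t"
  using assms(5) sat_OddIn[of Z E c1 M1 V v] sat_OddIn[of Z E c2 M2 V v] assms(1-4)
  by (auto simp: HasType_def parity_type_def prod_eq_iff odd_iff_mod_2_eq_one)

lemma sat_TypeRep:
  assumes x: "x \<noteq> 9" and X: "X \<noteq> 7" "X \<noteq> 8" and S: "interprets_SET E S"
    and M: "interprets_colour E c1 M1" "interprets_colour E c2 M2" and t: "t \<in> {..<2} \<times> {..<2}"
  shows "sat E v V (TypeRep c1 c2 t x X) \<longleftrightarrow> type_rep S (parity_type M1 M2) t (v x) (V X)"
proof (cases "V X \<in> S")
  case False
  then show ?thesis unfolding TypeRep_def type_rep_def using sat_InSET[OF S] by simp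
next
  case True
  have S_univ: "Z \<subseteq> univ E" if "Z \<in> S" for Z using S that unfolding interprets_SET_def by blast
  have XU: "V X \<subseteq> univ E" using S True unfolding interprets_SET_def by blast
  have "sat E v V (TypeRep c1 c2 t x X) \<longleftrightarrow> V X \<in> S \<and> v x \<in> V X \<and> \<not> V X \<subseteq> {v x} \<and>
      parity_type M1 M2 (V X) = t \<and>
      (\<forall>Z. Z \<subseteq> univ E \<longrightarrow> Z \<in> S \<and> v x \<in> Z \<and> Z \<subseteq> V X \<and> \<not> V X \<subseteq> Z \<and> \<not> Z \<subseteq> {v x} \<longrightarrow>
         parity_type M1 M2 Z \<noteq> t)"
    using x X XU M t
    by (simp add: TypeRep_def sat_InSET[OF S] sat_SubsetF sat_HasOther sat_HasType)
  also have "\<dots> \<longleftrightarrow> type_rep S (parity_type M1 M2) t (v x) (V X)"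
  proof -
    have "v x \<in> Z \<Longrightarrow> \<not> Z \<subseteq> {v x} \<longleftrightarrow> Z \<noteq> {v x}" for Z by blast
    then have "(\<forall>Z. Z \<subseteq> univ E \<longrightarrow>
        Z \<in> S \<and> v x \<in> Z \<and> Z \<subseteq> V X \<and> \<not> V X \<subseteq> Z \<and> \<not> Z \<subseteq> {v x} \<longrightarrow> parity_type M1 M2 Z \<noteq> t)
      \<longleftrightarrow> (\<forall>Z\<in>S. v x \<in> Z \<longrightarrow> Z \<subset> V X \<longrightarrow> Z \<noteq> {v x} \<longrightarrow> parity_type M1 M2 Z \<noteq> t)"
      using S_univ by blast
    moreover have "\<not> V X \<subseteq> {v x} \<longleftrightarrow> V X \<noteq> {v x}" if "v x \<in> V X" using that by blast
    ultimately show ?thesis unfolding type_rep_def by blast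
  qed
  finally show ?thesis .
qed

section \<open>Atomic transductions\<close>

definition colour :: "string \<Rightarrow> 'e set \<Rightarrow> 'e struct \<Rightarrow> 'e struct" where
  "colour c X A = \<lparr> univ = univ A, voc = voc A \<union> {RelSym c 1},
     rels = (rels A)(RelSym c 1 := {[a] | a. a \<in> X}), sets = sets A \<rparr>"

fun colour_all :: "string list \<Rightarrow> (nat \<Rightarrow> 'e set) \<Rightarrow> 'e struct \<Rightarrow> 'e struct" where
  "colour_all [] X A = A"
| "colour_all (c # cs) X A = colour_all cs (X \<circ> Suc) (colour c (X 0) A)"

lemma colour_all_fields:
  "univ (colour_all cs X A) = univ A"
  "sets (colour_all cs X A) = sets A"
  "voc (colour_all cs X A) = voc A \<union> {RelSym c 1 | c. c \<in> set cs}"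
  by (induction cs arbitrary: X A) (auto simp: colour_def)

lemma colour_all_rels_other:
  "(\<And>c. c \<in> set cs \<Longrightarrow> Q \<noteq> RelSym c 1) \<Longrightarrow> rels (colour_all cs X A) Q = rels A Q"
  by (induction cs arbitrary: X A) (auto simp: colour_def)

lemma colour_all_rels:
  "distinct cs \<Longrightarrow> j < length cs \<Longrightarrow> rels (colour_all cs X A) (RelSym (cs ! j) 1) = {[a] | a. a \<in> X j}"
proof (induction cs arbitrary: j X A)
  case (Cons c cs)
  show ?case
  proof (cases j)
    case 0
    have "rels (colour_all cs (X \<circ> Suc) (colour c (X 0) A)) (RelSym c 1) =
        rels (colour c (X 0) A) (RelSym c 1)"
      by (rule colour_all_rels_other) (use Cons.prems in auto)
    with 0 show ?thesis by (simp add: colour_def)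
  next
    case (Suc k)
    with Cons show ?thesis by simp
  qed
qed simp

lemma run_Colours:
  assumes "distinct cs" "\<And>c. c \<in> set cs \<Longrightarrow> RelSym c 1 \<notin> voc A"
  shows "B \<in> run (map Colour cs @ ts) A \<longleftrightarrow>
    (\<exists>X. (\<forall>j<length cs. X j \<subseteq> univ A) \<and> B \<in> run ts (colour_all cs X A))"
  using assms
proof (induction cs arbitrary: A)
  case (Cons c cs)
  have "B \<in> run (map Colour (c # cs) @ ts) A \<longleftrightarrow>
      (\<exists>X0 \<subseteq> univ A. B \<in> run (map Colour cs @ ts) (colour c X0 A))"
    using Cons.prems(2) by (auto simp: colour_outputs_def colour_def)
  also have "\<dots> \<longleftrightarrow> (\<exists>X0 \<subseteq> univ A. \<exists>X. (\<forall>j<length cs. X j \<subseteq> univ A) \<and>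
      B \<in> run ts (colour_all cs X (colour c X0 A)))"
  proof -
    have "RelSym c' 1 \<notin> voc (colour c X0 A)" if "c' \<in> set cs" for c' X0
      using that Cons.prems unfolding colour_def by auto
    then show ?thesis using Cons.IH Cons.prems(1) by (simp add: colour_def)
  qed
  also have "\<dots> \<longleftrightarrow> (\<exists>X. (\<forall>j<length (c # cs). X j \<subseteq> univ A) \<and> B \<in> run ts (colour_all (c # cs) X A))"
  proof
    assume "\<exists>X0 \<subseteq> univ A. \<exists>X. (\<forall>j<length cs. X j \<subseteq> univ A) \<and> B \<in> run ts (colour_all cs X (colour c X0 A))"
    then obtain X0 X where "X0 \<subseteq> univ A" "\<forall>j<length cs. X j \<subseteq> univ A"
      "B \<in> run ts (colour_all cs X (colour c X0 A))" by blast
    then show "\<exists>X. (\<forall>j<length (c # cs). X j \<subseteq> univ A) \<and> B \<in> run ts (colour_all (c # cs) X A)"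
      by (intro exI[of _ "case_nat X0 X"]) (fastforce simp: less_Suc_eq_0_disj comp_def)
  next
    assume "\<exists>X. (\<forall>j<length (c # cs). X j \<subseteq> univ A) \<and> B \<in> run ts (colour_all (c # cs) X A)"
    then obtain X where "\<forall>j<Suc (length cs). X j \<subseteq> univ A" "B \<in> run ts (colour_all (c # cs) X A)"
      by auto
    then show "\<exists>X0 \<subseteq> univ A. \<exists>X. (\<forall>j<length cs. X j \<subseteq> univ A) \<and> B \<in> run ts (colour_all cs X (colour c X0 A))"
      by (intro exI[of _ "X 0"] conjI exI[of _ "X \<circ> Suc"]) auto
  qed
  finally show ?case .
qed simp

definition copy_struct :: "string list \<Rightarrow> ('e \<times> nat \<Rightarrow> 'e) \<Rightarrow> 'e struct \<Rightarrow> 'e struct" where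
  "copy_struct ns f A = \<lparr> univ = univ A \<union> f ` (univ A \<times> {..<length ns}),
     voc = voc A \<union> {RelSym (ns ! i) 2 | i. i < length ns},
     rels = (\<lambda>Q. if \<exists>i<length ns. Q = RelSym (ns ! i) 2
                 then {[a, f (a, i)] | a i. a \<in> univ A \<and> i < length ns \<and> Q = RelSym (ns ! i) 2}
                 else rels A Q),
     sets = sets A \<rparr>"

definition fresh_copies :: "nat \<Rightarrow> ('e \<times> nat \<Rightarrow> 'e) \<Rightarrow> 'e set \<Rightarrow> bool" where
  "fresh_copies k f V \<longleftrightarrow> inj_on f (V \<times> {..<k}) \<and> f ` (V \<times> {..<k}) \<inter> V = {}"

lemma copy_outputs_eq: "copy_outputs ns A = {copy_struct ns f A | f. fresh_copies (length ns) f (univ A)}"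
  unfolding copy_outputs_def copy_struct_def fresh_copies_def by auto

lemma fresh_copies_exist:
  assumes "infinite (UNIV :: 'e set)" "finite (V :: 'e set)"
  obtains f where "fresh_copies k f V"
proof -
  have "infinite (UNIV - V)" using Diff_infinite_finite assms by blast
  then obtain g :: "nat \<Rightarrow> 'e" where g: "inj g" "range g \<subseteq> UNIV - V"
    using infinite_countable_subset by blast
  obtain h :: "'e \<times> nat \<Rightarrow> nat" where "inj_on h (V \<times> {..<k})"
    using finite_imp_inj_to_nat_seg[of "V \<times> {..<k}"] assms(2) by auto
  then have "inj_on (g \<circ> h) (V \<times> {..<k})"
    using g(1) by (simp add: comp_inj_on inj_on_subset)
  moreover have "(g \<circ> h) ` (V \<times> {..<k}) \<inter> V = {}" using g(2) by auto
  ultimately show thesis using that unfolding fresh_copies_def by blast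
qed

definition atom_form :: "symbol \<Rightarrow> form" where
  "atom_form Q = (if is_rel Q then RelAtom Q [0..<arity Q] else SetAtom Q [0..<arity Q])"

lemma interp_struct_atom_rels:
  assumes "is_rel Q" "map_of qs Q = Some (atom_form Q)"
    and "\<forall>xs\<in>rels D Q. length xs = arity Q \<and> set xs \<subseteq> univ D"
  shows "rels (interp_struct D qs) Q = rels D Q"
proof -
  have "Q \<in> fst ` set qs" using assms(2) by (metis map_of_SomeD fst_conv image_eqI)
  with assms(1,2) have "rels (interp_struct D qs) Q =
      {xs. length xs = arity Q \<and> set xs \<subseteq> univ D \<and> map (\<lambda>i. xs ! i) [0..<arity Q] \<in> rels D Q}"
    unfolding interp_struct_def atom_form_def by simp
  also have "\<dots> = {xs. length xs = arity Q \<and> set xs \<subseteq> univ D \<and> xs \<in> rels D Q}"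
    using map_nth by metis
  also have "\<dots> = rels D Q" using assms(3) by auto
  finally show ?thesis .
qed

lemma interp_struct_atom_sets:
  assumes "\<not> is_rel Q" "map_of qs Q = Some (atom_form Q)"
    and "\<forall>Xs\<in>sets D Q. length Xs = arity Q \<and> (\<forall>X\<in>set Xs. X \<subseteq> univ D)"
  shows "sets (interp_struct D qs) Q = sets D Q"
proof -
  have "Q \<in> fst ` set qs" using assms(2) by (metis map_of_SomeD fst_conv image_eqI)
  with assms(1,2) have "sets (interp_struct D qs) Q =
      {Xs. length Xs = arity Q \<and> (\<forall>X\<in>set Xs. X \<subseteq> univ D) \<and> map (\<lambda>i. Xs ! i) [0..<arity Q] \<in> sets D Q}"
    unfolding interp_struct_def atom_form_def by simp
  also have "\<dots> = {Xs. length Xs = arity Q \<and> (\<forall>X\<in>set Xs. X \<subseteq> univ D) \<and> Xs \<in> sets D Q}"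
    using map_nth by metis
  also have "\<dots> = sets D Q" using assms(3) by auto
  finally show ?thesis .
qed

lemma is_structure_tuples:
  assumes "is_structure \<Sigma> A"
  shows "\<forall>xs\<in>rels A Q. length xs = arity Q \<and> set xs \<subseteq> univ A"
    "\<forall>Xs\<in>sets A Q. length Xs = arity Q \<and> (\<forall>X\<in>set Xs. X \<subseteq> univ A)"
    "Q \<notin> \<Sigma> \<or> \<not> is_rel Q \<Longrightarrow> rels A Q = {}"
    "Q \<notin> \<Sigma> \<or> is_rel Q \<Longrightarrow> sets A Q = {}"
proof -
  have "Q \<in> \<Sigma> \<Longrightarrow> is_rel Q \<Longrightarrow> \<forall>xs\<in>rels A Q. length xs = arity Q \<and> set xs \<subseteq> univ A"
    and "Q \<in> \<Sigma> \<Longrightarrow> \<not> is_rel Q \<Longrightarrow> \<forall>Xs\<in>sets A Q. length Xs = arity Q \<and> (\<forall>X\<in>set Xs. X \<subseteq> univ A)"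
    and empty: "Q \<notin> \<Sigma> \<or> \<not> is_rel Q \<Longrightarrow> rels A Q = {}" "Q \<notin> \<Sigma> \<or> is_rel Q \<Longrightarrow> sets A Q = {}"
    using assms unfolding is_structure_def by blast+
  then show "\<forall>xs\<in>rels A Q. length xs = arity Q \<and> set xs \<subseteq> univ A"
    "\<forall>Xs\<in>sets A Q. length Xs = arity Q \<and> (\<forall>X\<in>set Xs. X \<subseteq> univ A)"
    "Q \<notin> \<Sigma> \<or> \<not> is_rel Q \<Longrightarrow> rels A Q = {}" "Q \<notin> \<Sigma> \<or> is_rel Q \<Longrightarrow> sets A Q = {}"
    by blast+
qed

section \<open>The transduction\<close>

text \<open>The colours \<open>col 0\<close> and \<open>col 1\<close> carry the parity colouring, \<open>col (i + 2)\<close> marks the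
  selected representatives of type \<open>type_code i\<close>, and \<open>cp i\<close> names the \<open>i\<close>-th copy.\<close>
locale tree_transduction =
  fixes \<Sigma> :: "symbol set" and syms :: "symbol list" and col :: "nat \<Rightarrow> string" and cp :: "nat \<Rightarrow> string"
  assumes syms: "set syms = \<Sigma>" "distinct syms"
    and ancestor_fresh: "ancestor \<notin> \<Sigma>"
    and col_inj: "inj_on col {..<5}" and cp_inj: "inj_on cp {..<3}"
    and col_fresh: "\<And>j. j < 5 \<Longrightarrow> RelSym (col j) 1 \<notin> \<Sigma>"
    and cp_fresh: "\<And>i. i < 3 \<Longrightarrow> RelSym (cp i) 2 \<notin> \<Sigma>"
begin

definition RepOf :: "nat \<Rightarrow> nat \<Rightarrow> nat \<Rightarrow> form" where
  "RepOf i y X = Conj (Coloured (col (i + 2)) y) (TypeRep (col 0) (col 1) (type_code i) y X)"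

definition FilterF :: form where
  "FilterF = Conj
     (AllSO 2 (Impl (Conj (InSET 2) (ExFO 2 (Conj (Mem 2 2) (HasOther 2 2))))
                    (Disjs 3 (\<lambda>i. ExFO 2 (RepOf i 2 2)))))
     (Conjs 3 (\<lambda>i. AllSO 2 (AllFO 2 (AllFO 3
        (Impl (Conj (RepOf i 2 2) (RepOf i 3 2)) (Eq 2 3))))))"

definition CopyNode :: "nat \<Rightarrow> nat \<Rightarrow> nat \<Rightarrow> form" where
  "CopyNode i x X = ExFO 2 (Conj (Linked (cp i) 2 x) (RepOf i 2 X))"

text \<open>The originals are exactly the elements that have a \<open>0\<close>-th copy.\<close>
definition KeepF :: form where
  "KeepF = Disj (ExFO 2 (Linked (cp 0) 0 2)) (Disjs 3 (\<lambda>i. ExSO 2 (CopyNode i 0 2)))"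

definition NodeF :: "nat \<Rightarrow> nat \<Rightarrow> form" where
  "NodeF x X = Disj (Conj (InSET X) (IsSingleton x X)) (Disjs 3 (\<lambda>i. CopyNode i x X))"

definition AncF :: form where
  "AncF = ExSO 0 (ExSO 1 (Conj (NodeF 0 0) (Conj (NodeF 1 1) (SubsetF 1 0))))"

definition out_formulas :: "(symbol \<times> form) list" where
  "out_formulas = map (\<lambda>Q. (Q, atom_form Q)) syms @ [(ancestor, AncF)]"

definition colours :: "string list" where "colours = map col [0..<5]"
definition copies :: "string list" where "copies = map cp [0..<3]"

definition tau :: "atomic list" where
  "tau = map Colour colours @ [Filter FilterF, Copy copies, Restrict KeepF, Interp out_formulas]"

lemma free_RepOf: "y \<noteq> 9 \<Longrightarrow> X \<noteq> 7 \<Longrightarrow> X \<noteq> 8 \<Longrightarrow> fo_free (RepOf i y X) = {y} \<and> so_free (RepOf i y X) = {X}"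
  by (auto simp: RepOf_def free_TypeRep Coloured_def)

lemma free_CopyNode: "x \<noteq> 2 \<Longrightarrow> X \<noteq> 7 \<Longrightarrow> X \<noteq> 8 \<Longrightarrow> fo_free (CopyNode i x X) = {x} \<and> so_free (CopyNode i x X) = {X}"
  by (auto simp: CopyNode_def free_RepOf)

lemma wf_tau: "wf_transduction tau"
proof -
  have "fo_free FilterF = {} \<and> so_free FilterF = {}"
    by (auto simp: FilterF_def free_RepOf)
  moreover have "fo_free KeepF \<subseteq> {0} \<and> so_free KeepF = {}"
    by (auto simp: KeepF_def free_CopyNode)
  moreover have "fo_free AncF \<subseteq> {..<2} \<and> so_free AncF = {}"
    by (auto simp: AncF_def NodeF_def free_CopyNode)
  moreover have "distinct (map fst out_formulas)"
    using syms ancestor_fresh by (auto simp: out_formulas_def comp_def)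
  moreover have "distinct copies"
    using cp_inj by (simp add: copies_def distinct_map atLeast0LessThan)
  ultimately show ?thesis
    by (auto simp: wf_transduction_def tau_def out_formulas_def atom_form_def)
qed

definition coloured_by :: "'e struct \<Rightarrow> (nat \<Rightarrow> 'e set) \<Rightarrow> bool" where
  "coloured_by E M \<longleftrightarrow> (\<forall>j<5. interprets_colour E (col j) (M j))"

definition links_copies :: "'e struct \<Rightarrow> 'e set \<Rightarrow> ('e \<times> nat \<Rightarrow> 'e) \<Rightarrow> bool" where
  "links_copies E orig f \<longleftrightarrow>
     (\<forall>i<3. \<forall>a b. [a, b] \<in> rels E (RelSym (cp i) 2) \<longleftrightarrow> a \<in> orig \<and> b = f (a, i) \<and> b \<in> univ E)"

lemma sat_RepOf:
  assumes "interprets_SET E S" "coloured_by E M" "i < 3" "y \<noteq> 9" "X \<noteq> 7" "X \<noteq> 8"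
  shows "sat E v V (RepOf i y X) \<longleftrightarrow>
    v y \<in> M (i + 2) \<and> type_rep S (parity_type (M 0) (M 1)) (type_code i) (v y) (V X)"
proof -
  have "interprets_colour E (col j) (M j)" if "j < 5" for j
    using assms(2) that unfolding coloured_by_def by blast
  from this[of 0] this[of 1] this[of "i + 2"] assms(3) show ?thesis
    using sat_TypeRep[OF assms(4-6,1) _ _ type_code_bits] sat_Coloured[of E "col (i + 2)" "M (i + 2)"]
    unfolding RepOf_def by simp
qed

lemma sat_FilterF:
  assumes S: "interprets_SET E S" "{} \<notin> S" and M: "coloured_by E M"
  shows "sat E v V FilterF \<longleftrightarrow> representative_selection S M"
proof -
  let ?rep = "\<lambda>i a Y. type_rep S (parity_type (M 0) (M 1)) (type_code i) a Y"
  have S_univ: "Y \<subseteq> univ E" if "Y \<in> S" for Y using S(1) that unfolding interprets_SET_def by blast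
  have rep_univ: "a \<in> univ E" "Y \<subseteq> univ E" if "?rep i a Y" for i a Y
    using that S_univ unfolding type_rep_def by blast+
  have internal: "internal S Y \<longleftrightarrow> Y \<in> S \<and> (\<exists>a\<in>univ E. a \<in> Y \<and> \<not> Y \<subseteq> {a})" if "Y \<subseteq> univ E" for Y
  proof -
    have "Y \<in> S \<Longrightarrow> \<exists>a. a \<in> Y" using S(2) by (metis ex_in_conv)
    then show ?thesis using that unfolding internal_def by (auto simp: subset_singleton_iff)
  qed
  have "sat E v V' (Disjs 3 (\<lambda>i. ExFO 2 (RepOf i 2 2))) \<longleftrightarrow>
      (\<exists>i<3. \<exists>a\<in>univ E. a \<in> M (i + 2) \<and> ?rep i a (V' 2))" for V'
  proof -
    have "sat E (v(2 := a)) V' (RepOf i 2 2) \<longleftrightarrow> a \<in> M (i + 2) \<and> ?rep i a (V' 2)" if "i < 3" for i a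
      using sat_RepOf[OF S(1) M that] by simp
    then show ?thesis by auto
  qed
  then have "sat E v V (AllSO 2 (Impl (Conj (InSET 2) (ExFO 2 (Conj (Mem 2 2) (HasOther 2 2))))
                    (Disjs 3 (\<lambda>i. ExFO 2 (RepOf i 2 2))))) \<longleftrightarrow>
      (\<forall>Y. Y \<subseteq> univ E \<longrightarrow> Y \<in> S \<and> (\<exists>a\<in>univ E. a \<in> Y \<and> \<not> Y \<subseteq> {a}) \<longrightarrow>
         (\<exists>i<3. \<exists>a\<in>univ E. a \<in> M (i + 2) \<and> ?rep i a Y))"
    by (simp add: sat_InSET[OF S(1)] sat_HasOther)
  also have "\<dots> \<longleftrightarrow> (\<forall>Y. internal S Y \<longrightarrow> (\<exists>i<3. \<exists>a\<in>M (i + 2). ?rep i a Y))"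
    using internal rep_univ S_univ unfolding internal_def by metis
  moreover have "sat E v V (Conjs 3 (\<lambda>i. AllSO 2 (AllFO 2 (AllFO 3
        (Impl (Conj (RepOf i 2 2) (RepOf i 3 2)) (Eq 2 3)))))) \<longleftrightarrow>
      (\<forall>i<3. \<forall>Y. Y \<subseteq> univ E \<longrightarrow> (\<forall>a\<in>univ E. \<forall>b\<in>univ E.
         a \<in> M (i + 2) \<and> ?rep i a Y \<and> b \<in> M (i + 2) \<and> ?rep i b Y \<longrightarrow> a = b))"
    using sat_RepOf[OF S(1) M] by simp
  moreover have "\<dots> \<longleftrightarrow> (\<forall>i<3. \<forall>a\<in>M (i + 2). \<forall>b\<in>M (i + 2). \<forall>Y. ?rep i a Y \<longrightarrow> ?rep i b Y \<longrightarrow> a = b)"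
    using rep_univ by metis
  ultimately show ?thesis unfolding FilterF_def representative_selection_def by simp
qed

lemma sat_CopyNode:
  assumes S: "interprets_SET E S" and M: "coloured_by E M" and links: "links_copies E orig f"
    and orig: "orig \<subseteq> univ E" and vars: "i < 3" "x \<noteq> 2" "X \<noteq> 7" "X \<noteq> 8" and x: "v x \<in> univ E"
  shows "sat E v V (CopyNode i x X) \<longleftrightarrow>
    (\<exists>a\<in>orig. v x = f (a, i) \<and> a \<in> M (i + 2) \<and> type_rep S (parity_type (M 0) (M 1)) (type_code i) a (V X))"
  using sat_RepOf[OF S M vars(1) _ vars(3,4)] links vars(1,2) x orig
  unfolding CopyNode_def links_copies_def by auto

definition copied :: "(nat \<Rightarrow> 'e set) \<Rightarrow> ('e \<times> nat \<Rightarrow> 'e) \<Rightarrow> 'e struct \<Rightarrow> 'e struct" where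
  "copied M f A = copy_struct copies f (colour_all colours M A)"

definition kept :: "(nat \<Rightarrow> 'e set) \<Rightarrow> ('e \<times> nat \<Rightarrow> 'e) \<Rightarrow> 'e struct \<Rightarrow> 'e set" where
  "kept M f A = {a \<in> univ (copied M f A). sat (copied M f A) (\<lambda>_. a) (\<lambda>_. {}) KeepF}"

definition restricted :: "(nat \<Rightarrow> 'e set) \<Rightarrow> ('e \<times> nat \<Rightarrow> 'e) \<Rightarrow> 'e struct \<Rightarrow> 'e struct" where
  "restricted M f A = restrict_struct (kept M f A) (copied M f A)"

definition result :: "(nat \<Rightarrow> 'e set) \<Rightarrow> ('e \<times> nat \<Rightarrow> 'e) \<Rightarrow> 'e struct \<Rightarrow> 'e struct" where
  "result M f A = interp_struct (restricted M f A) out_formulas"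

lemma colours_nth: "j < 5 \<Longrightarrow> colours ! j = col j" "length colours = 5" "distinct colours"
  using col_inj by (auto simp: colours_def distinct_map atLeast0LessThan)

lemma copies_nth: "i < 3 \<Longrightarrow> copies ! i = cp i" "length copies = 3"
  by (auto simp: copies_def)

lemma run_tau:
  assumes "is_structure \<Sigma> A"
  shows "B \<in> run tau A \<longleftrightarrow> (\<exists>M f. (\<forall>j<5. M j \<subseteq> univ A) \<and>
    sat (colour_all colours M A) (\<lambda>_. undefined) (\<lambda>_. {}) FilterF \<and>
    fresh_copies 3 f (univ A) \<and> B = result M f A)"
proof -
  have voc: "voc A = \<Sigma>" using assms unfolding is_structure_def by simp
  then have "c \<in> set colours \<Longrightarrow> RelSym c 1 \<notin> voc A" for c
    using col_fresh by (auto simp: colours_def)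
  then have "B \<in> run tau A \<longleftrightarrow> (\<exists>M. (\<forall>j<length colours. M j \<subseteq> univ A) \<and>
      B \<in> run [Filter FilterF, Copy copies, Restrict KeepF, Interp out_formulas] (colour_all colours M A))"
    unfolding tau_def by (rule run_Colours[OF colours_nth(3)])
  moreover have "\<forall>n\<in>set copies. RelSym n 2 \<notin> voc (colour_all colours M A)" for M
    using cp_fresh voc by (auto simp: colour_all_fields copies_def)
  ultimately show ?thesis unfolding colours_nth(2)
    by (auto simp: copy_outputs_eq copies_nth colour_all_fields result_def restricted_def kept_def copied_def)
qed

lemma copied_fields:
  "univ (copied M f A) = univ A \<union> f ` (univ A \<times> {..<3})"
  "sets (copied M f A) = sets A"
  "i < 3 \<Longrightarrow> rels (copied M f A) (RelSym (cp i) 2) = {[a, f (a, i)] | a. a \<in> univ A}"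
  "(\<And>i. i < 3 \<Longrightarrow> Q \<noteq> RelSym (cp i) 2) \<Longrightarrow> rels (copied M f A) Q = rels (colour_all colours M A) Q"
proof -
  show "univ (copied M f A) = univ A \<union> f ` (univ A \<times> {..<3})" "sets (copied M f A) = sets A"
    by (simp_all add: copied_def copy_struct_def copies_nth colour_all_fields)
  show "(\<And>i. i < 3 \<Longrightarrow> Q \<noteq> RelSym (cp i) 2) \<Longrightarrow> rels (copied M f A) Q = rels (colour_all colours M A) Q"
  proof -
    assume "\<And>i. i < 3 \<Longrightarrow> Q \<noteq> RelSym (cp i) 2"
    then have "\<not> (\<exists>i<length copies. Q = RelSym (copies ! i) 2)" using copies_nth by auto
    then show ?thesis by (auto simp: copied_def copy_struct_def)
  qed
  assume i: "i < 3"
  then have key: "j < length copies \<and> RelSym (cp i) 2 = RelSym (copies ! j) 2 \<longleftrightarrow> j = i" for j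
    using cp_inj copies_nth unfolding inj_on_def by auto
  then have "\<exists>j<length copies. RelSym (cp i) 2 = RelSym (copies ! j) 2" by blast
  then have "rels (copied M f A) (RelSym (cp i) 2) =
      {[a, f (a, j)] | a j. a \<in> univ A \<and> j < length copies \<and> RelSym (cp i) 2 = RelSym (copies ! j) 2}"
    by (simp add: copied_def copy_struct_def colour_all_fields)
  also have "\<dots> = {[a, f (a, i)] | a. a \<in> univ A}"
    unfolding key by blast
  finally show "rels (copied M f A) (RelSym (cp i) 2) = {[a, f (a, i)] | a. a \<in> univ A}" .
qed

lemma originals_kept: "univ A \<subseteq> kept M f A"
proof
  fix a assume a: "a \<in> univ A"
  then have "[a, f (a, 0)] \<in> rels (copied M f A) (RelSym (cp 0) 2)" "f (a, 0) \<in> univ (copied M f A)"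
    by (auto simp: copied_fields)
  with a show "a \<in> kept M f A"
    unfolding kept_def KeepF_def by (auto simp: copied_fields)
qed

lemma restricted_fields:
  "univ (restricted M f A) = kept M f A"
  "rels (restricted M f A) Q = {xs \<in> rels (copied M f A) Q. set xs \<subseteq> kept M f A}"
  "sets (restricted M f A) Q = {Xs \<in> sets A Q. \<forall>X\<in>set Xs. X \<subseteq> kept M f A}"
  by (auto simp: restricted_def restrict_struct_def kept_def copied_fields)

lemma voc_out_formulas: "fst ` set out_formulas = insert ancestor \<Sigma>"
  using syms unfolding out_formulas_def by (simp add: image_image)

lemma map_of_out_formulas:
  "Q \<in> \<Sigma> \<Longrightarrow> map_of out_formulas Q = Some (atom_form Q)"
  "map_of out_formulas ancestor = Some AncF"
proof -
  have "map_of (map (\<lambda>Q. (Q, atom_form Q)) syms) Q = (if Q \<in> set syms then Some (atom_form Q) else None)" for Q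
    by (induction syms) auto
  then show "Q \<in> \<Sigma> \<Longrightarrow> map_of out_formulas Q = Some (atom_form Q)"
    "map_of out_formulas ancestor = Some AncF"
    using syms ancestor_fresh unfolding out_formulas_def by (auto simp: map_add_def split: option.split)
qed

lemma restricted_Sigma:
  assumes A: "is_structure \<Sigma> A" and Q: "Q \<in> \<Sigma>"
  shows "rels (restricted M f A) Q = rels A Q" "sets (restricted M f A) Q = sets A Q"
proof -
  have "rels (copied M f A) Q = rels (colour_all colours M A) Q"
    by (rule copied_fields(4)) (use cp_fresh Q in blast)
  also have "\<dots> = rels A Q"
    by (rule colour_all_rels_other) (use col_fresh Q in \<open>auto simp: colours_def\<close>)
  moreover have "\<forall>xs\<in>rels A Q. set xs \<subseteq> kept M f A" "\<forall>Xs\<in>sets A Q. \<forall>X\<in>set Xs. X \<subseteq> kept M f A"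
    using is_structure_tuples(1,2)[OF A, of Q] originals_kept[of A M f] by blast+
  ultimately have "{xs \<in> rels (copied M f A) Q. set xs \<subseteq> kept M f A} = rels A Q"
    "{Xs \<in> sets A Q. \<forall>X\<in>set Xs. X \<subseteq> kept M f A} = sets A Q"
    by blast+
  then show "rels (restricted M f A) Q = rels A Q" "sets (restricted M f A) Q = sets A Q"
    by (simp_all add: restricted_fields)
qed

lemma result_fields:
  "univ (result M f A) = kept M f A"
  "voc (result M f A) = insert ancestor \<Sigma>"
  "rels (result M f A) ancestor =
     {xs. length xs = 2 \<and> set xs \<subseteq> kept M f A \<and> sat (restricted M f A) (\<lambda>i. xs ! i) (\<lambda>_. {}) AncF}"
  using voc_out_formulas map_of_out_formulas(2)
  by (simp_all add: result_def interp_struct_def restricted_fields)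

lemma result_rels:
  assumes A: "is_structure \<Sigma> A" and "Q \<noteq> ancestor"
  shows "rels (result M f A) Q = (if Q \<in> \<Sigma> then rels A Q else {})"
proof (cases "Q \<in> \<Sigma> \<and> is_rel Q")
  case True
  have "\<forall>xs\<in>rels A Q. length xs = arity Q \<and> set xs \<subseteq> kept M f A"
    using is_structure_tuples(1)[OF A, of Q] originals_kept[of A M f] by blast
  with True have "\<forall>xs\<in>rels (restricted M f A) Q. length xs = arity Q \<and> set xs \<subseteq> univ (restricted M f A)"
    by (simp add: restricted_Sigma[OF A] restricted_fields(1))
  with True have "rels (result M f A) Q = rels (restricted M f A) Q"
    unfolding result_def by (intro interp_struct_atom_rels map_of_out_formulas(1)) auto
  with True show ?thesis by (simp add: restricted_Sigma[OF A])
next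
  case False
  with assms show ?thesis
    using is_structure_tuples(3)[OF A] voc_out_formulas by (auto simp: result_def interp_struct_def)
qed

lemma result_sets:
  assumes A: "is_structure \<Sigma> A"
  shows "sets (result M f A) Q = (if Q \<in> \<Sigma> then sets A Q else {})"
proof (cases "Q \<in> \<Sigma> \<and> \<not> is_rel Q")
  case True
  have "\<forall>Xs\<in>sets A Q. length Xs = arity Q \<and> (\<forall>X\<in>set Xs. X \<subseteq> kept M f A)"
    using is_structure_tuples(2)[OF A, of Q] originals_kept[of A M f] by blast
  with True have "\<forall>Xs\<in>sets (restricted M f A) Q. length Xs = arity Q \<and> (\<forall>X\<in>set Xs. X \<subseteq> univ (restricted M f A))"
    by (simp add: restricted_Sigma[OF A] restricted_fields(1))
  with True have "sets (result M f A) Q = sets (restricted M f A) Q"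
    unfolding result_def by (intro interp_struct_atom_sets map_of_out_formulas(1)) auto
  with True show ?thesis by (simp add: restricted_Sigma[OF A])
next
  case False
  with assms show ?thesis
    using is_structure_tuples(4)[OF A] voc_out_formulas by (auto simp: result_def interp_struct_def)
qed

lemma overlay_tau: "overlay_on \<Sigma> tau TYPE('e)"
  unfolding overlay_on_def
proof (intro allI impI ballI)
  fix A :: "'e struct" and B assume A: "is_structure \<Sigma> A" and "B \<in> run tau A"
  then obtain M f where B: "B = result M f A" using run_tau by blast
  have voc: "voc A = \<Sigma>" using A unfolding is_structure_def by simp
  show "substruct A B"
    unfolding substruct_def B
  proof (intro conjI ballI)
    show "voc A \<subseteq> voc (result M f A)" "univ A \<subseteq> univ (result M f A)"
      using originals_kept[of A M f] voc by (simp_all add: result_fields subset_insertI)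
    fix Q assume "Q \<in> voc A"
    with voc ancestor_fresh have "Q \<in> \<Sigma>" "Q \<noteq> ancestor" by auto
    then show "rels A Q = rels (result M f A) Q" "sets A Q = sets (result M f A) Q"
      using result_rels[OF A] result_sets[OF A] by simp_all
  qed
qed

end

context tree_transduction
begin

lemma coloured_by_colour_all: "coloured_by (colour_all colours M A) M"
  and coloured_by_copied: "coloured_by (copied M f A) M"
proof -
  have "rels (colour_all colours M A) (RelSym (col j) 1) = {[a] | a. a \<in> M j}" if "j < 5" for j
    using colour_all_rels[of colours j M A] colours_nth that by simp
  moreover have "rels (copied M f A) (RelSym (col j) 1) = rels (colour_all colours M A) (RelSym (col j) 1)" for j
    by (rule copied_fields(4)) simp
  ultimately show "coloured_by (colour_all colours M A) M" "coloured_by (copied M f A) M"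
    unfolding coloured_by_def interprets_colour_def by auto
qed

lemma coloured_by_restricted:
  assumes "\<And>j. j < 5 \<Longrightarrow> M j \<subseteq> univ A"
  shows "coloured_by (restricted M f A) M"
proof -
  have "\<forall>j<5. \<forall>a. [a] \<in> rels (copied M f A) (RelSym (col j) 1) \<longleftrightarrow> a \<in> M j"
    using coloured_by_copied[of M f A] unfolding coloured_by_def interprets_colour_def .
  with assms originals_kept[of A M f] show ?thesis
    unfolding coloured_by_def interprets_colour_def by (auto simp: restricted_fields)
qed

lemma links_copies_copied: "links_copies (copied M f A) (univ A) f"
  and links_copies_restricted: "links_copies (restricted M f A) (univ A) f"
  unfolding links_copies_def using originals_kept[of A M f] by (auto simp: copied_fields restricted_fields)

lemma interprets_SET_pipeline:
  assumes "sets A SET = {[Y] | Y. Y \<in> S}" "\<And>Y. Y \<in> S \<Longrightarrow> Y \<subseteq> univ A"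
  shows "interprets_SET (colour_all colours M A) S" "interprets_SET (copied M f A) S"
    "interprets_SET (restricted M f A) S"
  using assms originals_kept[of A M f]
  by (auto simp: interprets_SET_def colour_all_fields copied_fields restricted_fields)

end

section \<open>Correctness on laminar set systems\<close>

locale tree_transduction_run = tree_transduction \<Sigma> syms col cp + laminar_system U S
  for \<Sigma> syms col cp and U :: "'e set" and S +
  fixes A :: "'e struct" and M :: "nat \<Rightarrow> 'e set" and f :: "'e \<times> nat \<Rightarrow> 'e"
  assumes A: "is_structure \<Sigma> A" and sub: "substruct (set_system_struct U S) A"
    and M: "\<And>j. j < 5 \<Longrightarrow> M j \<subseteq> univ A" and f: "fresh_copies 3 f (univ A)"
begin

abbreviation T :: "'e set \<Rightarrow> nat \<times> nat" where "T \<equiv> parity_type (M 0) (M 1)"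

definition copy_nodes :: "'e set" where
  "copy_nodes = {f (a, i) | a i. i < 3 \<and> a \<in> M (i + 2) \<and> (\<exists>Y. type_rep S T (type_code i) a Y)}"

lemma U_univ: "U \<subseteq> univ A"
  using sub unfolding substruct_def set_system_struct_def by simp

lemma sets_SET: "sets A SET = {[Y] | Y. Y \<in> S}"
  using sub unfolding substruct_def set_system_struct_def by auto

lemma S_univ: "Y \<in> S \<Longrightarrow> Y \<subseteq> univ A"
  using member_subset U_univ by blast

lemma f_eq_iff: "a \<in> univ A \<Longrightarrow> b \<in> univ A \<Longrightarrow> i < 3 \<Longrightarrow> j < 3 \<Longrightarrow> f (a, i) = f (b, j) \<longleftrightarrow> a = b \<and> i = j"
  using f unfolding fresh_copies_def inj_on_def by blast

lemma f_fresh: "a \<in> univ A \<Longrightarrow> i < 3 \<Longrightarrow> f (a, i) \<notin> univ A"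
  using f unfolding fresh_copies_def by blast

lemmas interprets_SET = interprets_SET_pipeline[OF sets_SET S_univ]

lemma sat_FilterF_iff:
  "sat (colour_all colours M A) v V FilterF \<longleftrightarrow> representative_selection S M"
  using sat_FilterF[OF interprets_SET(1) _ coloured_by_colour_all] member_nonempty by blast

lemma kept_eq: "kept M f A = univ A \<union> copy_nodes"
proof -
  let ?C = "copied M f A"
  have univ_C: "univ ?C = univ A \<union> f ` (univ A \<times> {..<3})" by (rule copied_fields(1))
  have original: "(\<exists>y\<in>univ ?C. [x, y] \<in> rels ?C (RelSym (cp 0) 2)) \<longleftrightarrow> x \<in> univ A" for x
    using univ_C by (auto simp: copied_fields(3))
  have copy: "sat ?C (\<lambda>_. x) ((\<lambda>_. {})(2 := Y)) (CopyNode i 0 2) \<longleftrightarrow>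
      (\<exists>a\<in>univ A. x = f (a, i) \<and> a \<in> M (i + 2) \<and> type_rep S T (type_code i) a Y)"
    if "i < 3" "x \<in> univ ?C" for x Y i
    using sat_CopyNode[OF interprets_SET(2) coloured_by_copied links_copies_copied _ that(1)] that(2) univ_C
    by simp
  have "x \<in> kept M f A \<longleftrightarrow> x \<in> univ A \<union> copy_nodes" for x
  proof -
    have "x \<in> kept M f A \<longleftrightarrow> x \<in> univ ?C \<and> (x \<in> univ A \<or>
        (\<exists>i<3. \<exists>Y\<subseteq>univ ?C. \<exists>a\<in>univ A. x = f (a, i) \<and> a \<in> M (i + 2) \<and> type_rep S T (type_code i) a Y))"
      unfolding kept_def KeepF_def using original copy by auto
    also have "\<dots> \<longleftrightarrow> x \<in> univ A \<union> copy_nodes"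
    proof
      assume x: "x \<in> univ A \<union> copy_nodes"
      show "x \<in> univ ?C \<and> (x \<in> univ A \<or>
        (\<exists>i<3. \<exists>Y\<subseteq>univ ?C. \<exists>a\<in>univ A. x = f (a, i) \<and> a \<in> M (i + 2) \<and> type_rep S T (type_code i) a Y))"
      proof (cases "x \<in> univ A")
        case False
        with x obtain a i Y where a: "x = f (a, i)" "i < 3" "a \<in> M (i + 2)" "type_rep S T (type_code i) a Y"
          unfolding copy_nodes_def by blast
        moreover have "a \<in> univ A" using M[of "i + 2"] a(2,3) by auto
        moreover have "Y \<subseteq> univ ?C" using a(4) S_univ univ_C unfolding type_rep_def by blast
        ultimately show ?thesis using univ_C by blast
      qed (simp add: univ_C)
    qed (auto simp: copy_nodes_def)
    finally show ?thesis .
  qed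
  then show ?thesis by blast
qed

definition node :: "'e \<Rightarrow> 'e set" where
  "node u = (if u \<in> univ A then {u}
     else (THE Y. \<exists>i<3. \<exists>a\<in>univ A. u = f (a, i) \<and> type_rep S T (type_code i) a Y))"

lemma node_copy:
  assumes i: "i < 3" and a: "a \<in> univ A" and rep: "type_rep S T (type_code i) a Y"
  shows "node (f (a, i)) = Y"
proof -
  have "(THE Y. \<exists>j<3. \<exists>b\<in>univ A. f (a, i) = f (b, j) \<and> type_rep S T (type_code j) b Y) = Y"
  proof (rule the_equality)
    show "\<exists>j<3. \<exists>b\<in>univ A. f (a, i) = f (b, j) \<and> type_rep S T (type_code j) b Y"
      using i a rep by blast
  next
    fix Y' assume "\<exists>j<3. \<exists>b\<in>univ A. f (a, i) = f (b, j) \<and> type_rep S T (type_code j) b Y'"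
    then obtain j b where "j < 3" "b \<in> univ A" "f (a, i) = f (b, j)" "type_rep S T (type_code j) b Y'"
      by blast
    with i a f_eq_iff[of a b i j] have "type_rep S T (type_code i) a Y'" by simp
    with rep show "Y' = Y" by (rule type_rep_unique[symmetric])
  qed
  with i a f_fresh[OF a i] show ?thesis unfolding node_def by simp
qed

lemma node_U: "a \<in> U \<Longrightarrow> node a = {a}"
  using U_univ unfolding node_def by auto

lemma copy_nodesE:
  assumes "u \<in> copy_nodes"
  obtains a i where "u = f (a, i)" "i < 3" "a \<in> univ A" "a \<in> M (i + 2)"
    "type_rep S T (type_code i) a (node u)"
proof -
  from assms obtain a i Y where a: "u = f (a, i)" "i < 3" "a \<in> M (i + 2)" "type_rep S T (type_code i) a Y"
    unfolding copy_nodes_def by blast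
  moreover from a(2,3) have "a \<in> univ A" using M[of "i + 2"] by auto
  moreover from calculation have "node u = Y" using node_copy by simp
  ultimately show thesis using that by simp
qed

lemma node_member:
  assumes "u \<in> U \<union> copy_nodes"
  shows "node u \<in> S"
proof (cases "u \<in> U")
  case True
  then show ?thesis using node_U singleton_member by simp
next
  case False
  with assms have "u \<in> copy_nodes" by simp
  then show ?thesis by (rule copy_nodesE) (simp add: type_rep_def)
qed

lemma node_iff:
  assumes u: "u \<in> kept M f A"
  shows "(Y \<in> S \<and> Y = {u}) \<or>
      (\<exists>i<3. \<exists>a\<in>univ A. u = f (a, i) \<and> a \<in> M (i + 2) \<and> type_rep S T (type_code i) a Y) \<longleftrightarrow>
    u \<in> U \<union> copy_nodes \<and> Y = node u"
proof (cases "u \<in> univ A")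
  case True
  have "u \<notin> copy_nodes"
  proof
    assume "u \<in> copy_nodes"
    then obtain a i where "u = f (a, i)" "i < 3" "a \<in> univ A" by (rule copy_nodesE)
    with True f_fresh show False by simp
  qed
  moreover have "u \<noteq> f (a, i)" if "i < 3" "a \<in> univ A" for a i using True f_fresh[OF that(2,1)] by auto
  moreover have "Y \<in> S \<and> Y = {u} \<longleftrightarrow> u \<in> U \<and> Y = {u}"
    using member_subset[of "{u}"] singleton_member[of u] by auto
  ultimately show ?thesis using True by (auto simp: node_def)
next
  case False
  with u kept_eq have copy_node: "u \<in> copy_nodes" by simp
  then obtain a i where a: "u = f (a, i)" "i < 3" "a \<in> univ A" "a \<in> M (i + 2)"
    and rep: "type_rep S T (type_code i) a (node u)"
    by (rule copy_nodesE)
  have "\<not> (Y \<in> S \<and> Y = {u})" using False member_subset[of "{u}"] U_univ by auto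
  moreover have "(\<exists>j<3. \<exists>b\<in>univ A. u = f (b, j) \<and> b \<in> M (j + 2) \<and> type_rep S T (type_code j) b Y)
      \<longleftrightarrow> type_rep S T (type_code i) a Y"
  proof
    assume "\<exists>j<3. \<exists>b\<in>univ A. u = f (b, j) \<and> b \<in> M (j + 2) \<and> type_rep S T (type_code j) b (Y)"
    then obtain j b where j: "j < 3" "b \<in> univ A" "u = f (b, j)" "type_rep S T (type_code j) b (Y)"
      by blast
    from a(1) j(3) have "f (a, i) = f (b, j)" by simp
    with f_eq_iff[OF a(3) j(2) a(2) j(1)] have "b = a" "j = i" by blast+
    with j(4) show "type_rep S T (type_code i) a Y" by simp
  qed (use a in blast)
  moreover have "type_rep S T (type_code i) a Y \<longleftrightarrow> Y = node u"
    using rep type_rep_unique by metis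
  ultimately show ?thesis using copy_node by blast
qed

lemma sat_NodeF:
  assumes vars: "x \<noteq> 2" "x \<noteq> 9" "X \<noteq> 7" "X \<noteq> 8"
    and x: "v x \<in> kept M f A" and X: "V X \<subseteq> kept M f A"
  shows "sat (restricted M f A) v V (NodeF x X) \<longleftrightarrow> v x \<in> U \<union> copy_nodes \<and> V X = node (v x)"
proof -
  let ?D = "restricted M f A"
  have single: "sat ?D v V (Conj (InSET X) (IsSingleton x X)) \<longleftrightarrow> V X \<in> S \<and> V X = {v x}"
    using sat_InSET[OF interprets_SET(3)] sat_IsSingleton[OF vars(2), of V X ?D v] x X
    by (simp add: restricted_fields)
  have copy: "sat ?D v V (CopyNode i x X) \<longleftrightarrow>
      (\<exists>a\<in>univ A. v x = f (a, i) \<and> a \<in> M (i + 2) \<and> type_rep S T (type_code i) a (V X))" if "i < 3" for i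
    using sat_CopyNode[OF interprets_SET(3) coloured_by_restricted[where M = M and f = f and A = A, OF M]
        links_copies_restricted _ that vars(1,3,4)]
      originals_kept[of A M f] x by (simp add: restricted_fields)
  have "sat ?D v V (NodeF x X) \<longleftrightarrow> (V X \<in> S \<and> V X = {v x}) \<or>
      (\<exists>i<3. \<exists>a\<in>univ A. v x = f (a, i) \<and> a \<in> M (i + 2) \<and> type_rep S T (type_code i) a (V X))"
    unfolding NodeF_def using single copy by auto
  also have "\<dots> \<longleftrightarrow> v x \<in> U \<union> copy_nodes \<and> V X = node (v x)"
    by (rule node_iff[OF x])
  finally show ?thesis .
qed

lemma node_kept: "u \<in> U \<union> copy_nodes \<Longrightarrow> node u \<subseteq> kept M f A"
  using node_member S_univ kept_eq by blast

lemma sat_AncF: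
  assumes "u \<in> kept M f A" "w \<in> kept M f A"
  shows "sat (restricted M f A) (\<lambda>i. [u, w] ! i) (\<lambda>_. {}) AncF \<longleftrightarrow>
    u \<in> U \<union> copy_nodes \<and> w \<in> U \<union> copy_nodes \<and> node w \<subseteq> node u"
proof -
  let ?v = "\<lambda>i. [u, w] ! i" and ?V = "\<lambda>Y0 Y1. (\<lambda>_. {})(0 := Y0, 1 := Y1)"
  have "sat (restricted M f A) ?v (?V Y0 Y1) (Conj (NodeF 0 0) (Conj (NodeF 1 1) (SubsetF 1 0))) \<longleftrightarrow>
      (u \<in> U \<union> copy_nodes \<and> Y0 = node u) \<and> (w \<in> U \<union> copy_nodes \<and> Y1 = node w) \<and> Y1 \<subseteq> Y0"
    if "Y0 \<subseteq> kept M f A" "Y1 \<subseteq> kept M f A" for Y0 Y1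
    using that assms by (simp add: sat_NodeF sat_SubsetF restricted_fields)
  moreover have "sat (restricted M f A) ?v (\<lambda>_. {}) AncF \<longleftrightarrow> (\<exists>Y0\<subseteq>kept M f A. \<exists>Y1\<subseteq>kept M f A.
      sat (restricted M f A) ?v (?V Y0 Y1) (Conj (NodeF 0 0) (Conj (NodeF 1 1) (SubsetF 1 0))))"
    by (simp add: AncF_def restricted_fields)
  ultimately have "sat (restricted M f A) ?v (\<lambda>_. {}) AncF \<longleftrightarrow> (\<exists>Y0\<subseteq>kept M f A. \<exists>Y1\<subseteq>kept M f A.
      (u \<in> U \<union> copy_nodes \<and> Y0 = node u) \<and> (w \<in> U \<union> copy_nodes \<and> Y1 = node w) \<and> Y1 \<subseteq> Y0)"
    by (simp only: cong: conj_cong)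
  then show ?thesis using node_kept by auto
qed

lemma ancestor_rel:
  "rels (result M f A) ancestor =
     {[u, w] | u w. u \<in> U \<union> copy_nodes \<and> w \<in> U \<union> copy_nodes \<and> node w \<subseteq> node u}"
  unfolding result_fields(3)
proof (intro equalityI subsetI)
  fix xs assume xs: "xs \<in> {xs. length xs = 2 \<and> set xs \<subseteq> kept M f A \<and>
    sat (restricted M f A) (\<lambda>i. xs ! i) (\<lambda>_. {}) AncF}"
  then obtain u w where "xs = [u, w]" by (auto simp: numeral_2_eq_2 length_Suc_conv)
  with xs sat_AncF[of u w] show "xs \<in> {[u, w] | u w. u \<in> U \<union> copy_nodes \<and> w \<in> U \<union> copy_nodes \<and> node w \<subseteq> node u}"
    by simp
next
  fix xs assume "xs \<in> {[u, w] | u w. u \<in> U \<union> copy_nodes \<and> w \<in> U \<union> copy_nodes \<and> node w \<subseteq> node u}"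
  then obtain u w where "xs = [u, w]" "u \<in> U \<union> copy_nodes" "w \<in> U \<union> copy_nodes" "node w \<subseteq> node u"
    by blast
  moreover have "U \<union> copy_nodes \<subseteq> kept M f A" using kept_eq U_univ by blast
  ultimately show "xs \<in> {xs. length xs = 2 \<and> set xs \<subseteq> kept M f A \<and>
    sat (restricted M f A) (\<lambda>i. xs ! i) (\<lambda>_. {}) AncF}" using sat_AncF[of u w] by auto
qed

definition tree :: "'e struct" where
  "tree = \<lparr> univ = U \<union> copy_nodes, voc = {ancestor},
     rels = (\<lambda>Q. if Q = ancestor then {[u, w] | u w. u \<in> U \<union> copy_nodes \<and> w \<in> U \<union> copy_nodes \<and>
                                        lam_ancestor S (node u) (node w)}
                 else {}),
     sets = (\<lambda>_. {}) \<rparr>"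

lemma result_eq_join: "result M f A = join A tree"
proof -
  have voc: "voc A = \<Sigma>" using A unfolding is_structure_def by simp
  have "lam_ancestor S (node u) (node w) \<longleftrightarrow> node w \<subseteq> node u"
    if "u \<in> U \<union> copy_nodes" "w \<in> U \<union> copy_nodes" for u w
    using lam_ancestor_iff node_member that by blast
  then have "rels (result M f A) ancestor = rels tree ancestor"
    unfolding ancestor_rel tree_def by auto
  then have "rels (result M f A) Q = rels (join A tree) Q" for Q
    using result_rels[OF A, of Q M f] voc ancestor_fresh by (auto simp: join_def tree_def)
  moreover have "sets (result M f A) Q = sets (join A tree) Q" for Q
    using result_sets[OF A, of M f Q] voc ancestor_fresh by (auto simp: join_def tree_def)
  moreover have "univ (result M f A) = univ (join A tree)"
    using result_fields(1)[of M f A] kept_eq U_univ by (auto simp: join_def tree_def)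
  moreover have "voc (result M f A) = voc (join A tree)"
    using result_fields(2)[of M f A] voc by (auto simp: join_def tree_def)
  ultimately show ?thesis by (simp add: struct.equality fun_eq_iff)
qed

lemma node_not_singleton: "u \<in> copy_nodes \<Longrightarrow> node u \<noteq> {b}"
proof -
  assume "u \<in> copy_nodes"
  then obtain a i where "type_rep S T (type_code i) a (node u)" by (rule copy_nodesE)
  then have "a \<in> node u" "node u \<noteq> {a}" unfolding type_rep_def by simp_all
  then show ?thesis by auto
qed

lemma node_inj_copy_nodes:
  assumes sel: "representative_selection S M"
    and u: "u \<in> copy_nodes" and u': "u' \<in> copy_nodes" and eq: "node u = node u'"
  shows "u = u'"
proof -
  obtain a i where a: "u = f (a, i)" "i < 3" "a \<in> M (i + 2)" "type_rep S T (type_code i) a (node u)"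
    using u by (rule copy_nodesE)
  obtain b j where b: "u' = f (b, j)" "j < 3" "b \<in> M (j + 2)" "type_rep S T (type_code j) b (node u')"
    using u' by (rule copy_nodesE)
  from b(4) eq have b4: "type_rep S T (type_code j) b (node u)" by simp
  have "type_code i = type_code j" using a(4) b4 unfolding type_rep_def by simp
  with a(2) b(2) have "i = j" using type_code_bij unfolding bij_betw_def inj_on_def by blast
  moreover have "\<forall>i<3. \<forall>a\<in>M (i + 2). \<forall>b\<in>M (i + 2). \<forall>Y.
      type_rep S T (type_code i) a Y \<longrightarrow> type_rep S T (type_code i) b Y \<longrightarrow> a = b"
    using sel unfolding representative_selection_def by (rule conjunct2)
  ultimately have "a = b" using a(2-4) b(3) b4 by blast
  with a(1) b(1) \<open>i = j\<close> show ?thesis by simp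
qed

lemma inj_on_node:
  assumes "representative_selection S M"
  shows "inj_on node (U \<union> copy_nodes)"
proof (rule inj_onI)
  fix u u' assume u: "u \<in> U \<union> copy_nodes" and u': "u' \<in> U \<union> copy_nodes" and eq: "node u = node u'"
  consider "u \<in> U" "u' \<in> U" | "u \<in> U" "u' \<in> copy_nodes" | "u \<in> copy_nodes" "u' \<in> U"
    | "u \<in> copy_nodes" "u' \<in> copy_nodes"
    using u u' by blast
  then show "u = u'"
  proof cases
    case 1
    then show ?thesis using eq node_U by simp
  next
    case 2
    then show ?thesis using eq node_U[of u] node_not_singleton[of u' u] by simp
  next
    case 3
    then show ?thesis using eq node_U[of u'] node_not_singleton[of u u'] by simp
  next
    case 4
    then show ?thesis using node_inj_copy_nodes[OF assms _ _ eq] by blast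
  qed
qed

lemma node_onto:
  assumes "representative_selection S M"
  shows "node ` (U \<union> copy_nodes) = S"
proof
  show "node ` (U \<union> copy_nodes) \<subseteq> S" using node_member by blast
  show "S \<subseteq> node ` (U \<union> copy_nodes)"
  proof
    fix Y assume Y: "Y \<in> S"
    show "Y \<in> node ` (U \<union> copy_nodes)"
    proof (cases "internal S Y")
      case True
      moreover have "\<forall>Y. internal S Y \<longrightarrow> (\<exists>i<3. \<exists>a\<in>M (i + 2). type_rep S T (type_code i) a Y)"
        using assms unfolding representative_selection_def by (rule conjunct1)
      ultimately obtain i a where a: "i < 3" "a \<in> M (i + 2)" "type_rep S T (type_code i) a Y"
        by blast
      then have "a \<in> univ A" using M[of "i + 2"] by auto
      with a have "f (a, i) \<in> copy_nodes" "node (f (a, i)) = Y"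
        using node_copy unfolding copy_nodes_def by auto
      then show ?thesis by (metis UnCI image_eqI)
    next
      case False
      with Y obtain a where "Y = {a}" "a \<in> U" by (rule non_internal_singleton)
      then show ?thesis using node_U by blast
    qed
  qed
qed

lemma tree_represents:
  assumes "representative_selection S M"
  shows "represents_laminar_tree tree U S"
  unfolding represents_laminar_tree_def
proof (intro conjI exI[of _ node])
  have univ_tree: "univ tree = U \<union> copy_nodes" by (simp add: tree_def)
  show "voc tree = {ancestor}" "U \<subseteq> univ tree" "sets tree = (\<lambda>_. {})" by (auto simp: tree_def)
  show "bij_betw node (univ tree) S"
    using inj_on_node[OF assms] node_onto[OF assms] univ_tree unfolding bij_betw_def by simp
  show "\<forall>a\<in>U. node a = {a}" using node_U by blast
  show "rels tree = (\<lambda>Q. if Q = ancestor then {[u, v] | u v. u \<in> univ tree \<and> v \<in> univ tree \<and>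
      lam_ancestor S (node u) (node v)} else {})"
    unfolding univ_tree by (simp add: tree_def)
qed

end

context tree_transduction
begin

lemma tau_laminar_tree:
  assumes inf: "infinite (UNIV :: 'e set)" and L: "laminar U S" and A: "is_structure \<Sigma> A"
    and sub: "substruct (set_system_struct U S) (A :: 'e struct)"
  shows "run tau A \<noteq> {}" "\<forall>B\<in>run tau A. \<exists>Tr. represents_laminar_tree Tr U S \<and> B = join A Tr"
proof -
  interpret laminar_system U S by (rule laminar_system.intro[OF L])
  have U_univ: "U \<subseteq> univ A" using sub unfolding substruct_def set_system_struct_def by simp
  obtain M where M: "\<And>j. M j \<subseteq> U" and sel: "representative_selection S M"
    using representative_selection_exists by blast
  have "finite (univ A)" using A unfolding is_structure_def by simp
  then obtain f where f: "fresh_copies 3 f (univ A)" by (rule fresh_copies_exist[OF inf])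
  interpret tree_transduction_run \<Sigma> syms col cp U S A M f
    using M U_univ by unfold_locales (use L A sub f in blast)+
  have "sat (colour_all colours M A) (\<lambda>_. undefined) (\<lambda>_. {}) FilterF"
    using sel sat_FilterF_iff by blast
  with M U_univ f have "result M f A \<in> run tau A"
    by (subst run_tau[OF A]) blast
  then show "run tau A \<noteq> {}" by blast
next
  show "\<forall>B\<in>run tau A. \<exists>Tr. represents_laminar_tree Tr U S \<and> B = join A Tr"
  proof
    fix B assume "B \<in> run tau A"
    then obtain M f where M: "\<And>j. j < 5 \<Longrightarrow> M j \<subseteq> univ A" and f: "fresh_copies 3 f (univ A)"
      and filter: "sat (colour_all colours M A) (\<lambda>_. undefined) (\<lambda>_. {}) FilterF" and B: "B = result M f A"
      using run_tau[OF A] by blast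
    interpret tree_transduction_run \<Sigma> syms col cp U S A M f
      by unfold_locales (use L A sub f M in blast)+
    show "\<exists>Tr. represents_laminar_tree Tr U S \<and> B = join A Tr"
      using tree_represents result_eq_join filter sat_FilterF_iff B by blast
  qed
qed

end

lemma fresh_names_exist:
  assumes "finite \<Sigma>"
  obtains name :: "nat \<Rightarrow> string" where "inj name" "\<And>j k. RelSym (name j) k \<notin> \<Sigma>"
proof -
  define len where "len Q = (case Q of RelSym s k \<Rightarrow> length s | SetSym s k \<Rightarrow> length s)" for Q
  define N where "N = (\<Sum>Q\<in>\<Sigma>. len Q)"
  have "length s \<le> N" if "RelSym s k \<in> \<Sigma>" for s k
    using member_le_sum[of "RelSym s k" \<Sigma> len] that assms unfolding N_def len_def by simp
  then have "RelSym (replicate (N + 1 + j) CHR ''a'') k \<notin> \<Sigma>" for j k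
    by (metis add_le_same_cancel1 le_add1 le_trans length_replicate not_one_le_zero)
  moreover have "inj (\<lambda>j. replicate (N + 1 + j) CHR ''a'')"
    by (rule injI) (metis add_left_cancel length_replicate)
  ultimately show thesis using that by blast
qed

theorem theorem3p1:
  fixes \<Sigma> :: "symbol set"
  assumes "infinite (UNIV :: 'e set)"
    and "finite \<Sigma>"
    and "SET \<in> \<Sigma>"
    and "ancestor \<notin> \<Sigma>"
  shows "\<exists>\<tau>. wf_transduction \<tau> \<and> overlay_on \<Sigma> \<tau> TYPE('e) \<and>
     (\<forall>(U :: 'e set) S (A :: 'e struct).
        laminar U S \<and> is_structure \<Sigma> A \<and> substruct (set_system_struct U S) A \<longrightarrow>
          run \<tau> A \<noteq> {} \<and>
          (\<forall>B\<in>run \<tau> A. \<exists>Tr. represents_laminar_tree Tr U S \<and> B = join A Tr))"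
proof -
  obtain syms where syms: "set syms = \<Sigma>" "distinct syms"
    using finite_distinct_list[OF assms(2)] by blast
  obtain name :: "nat \<Rightarrow> string" where name: "inj name" "\<And>j k. RelSym (name j) k \<notin> \<Sigma>"
    using fresh_names_exist[OF assms(2)] by blast
  interpret tree_transduction \<Sigma> syms name "\<lambda>i. name (5 + i)"
    using syms assms(4) name(2) by unfold_locales (auto simp: inj_on_def inj_eq[OF name(1)])
  show ?thesis
    using wf_tau overlay_tau tau_laminar_tree[OF assms(1)] by blast
qed

end
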